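(* Let $\varepsilon\le 1$. Then \[ S^*_{m,\alpha,\varepsilon,0}=\Omega\left(\frac{k}{m\alpha^2}+\frac{k}{\sqrt{m}\,\alpha\varepsilon}\right). \]
   Context: Let $[k]=\{1,\dots,k\}$ and let $\Delta_k$ be the set of probability distributions on $[k]$. There are $s$ users; each user $u$ holds $m$ samples, and all $sm$ samples are i.i.d. from an unknown $p\in\Delta_k$. An algorithm $A$ maps the users' data to an estimate $\hat p^A\in\Delta_k$, possibly randomized. Two datasets are adjacent if they differ only in the data of a single user. $A$ is $(\varepsilon,\delta)$-differentially private if for all adjacent datasets $D,D'$ and all measurable sets $S$ of outputs, $\Pr[A(D)\in S]\le e^{\varepsilon}\Pr[A(D')\in S]+\delta$. Let $L(A,s,m,p)=\mathbb{E}\left[\sum_{i=1}^k|p_i-\hat p^A_i|\right]$. The user complexity of $A$ is $S^A_{m,\alpha,\varepsilon,\delta}=\min\{s:\sup_{p\in\Delta_k}L(A,s,m,p)\le\alpha\}$, and $S^*_{m,\alpha,\varepsilon,\delta}=\min_A S^A_{m,\alpha,\varepsilon,\delta}$, the minimum over all $(\varepsilon,\delta)$-differentially private algorithms $A$. The constant in $\Omega$ is universal. *)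

theory Defs
  imports "HOL-Analysis.Analysis" "HOL-Probability.Probability"
begin

text \<open>Alphabet [k] is rendered as {..<k}; users as {..<s}; each user's samples as {..<m}.
  A dataset assigns to each (user, sample index) pair a symbol.\<close>

definition datasets :: "nat \<Rightarrow> nat \<Rightarrow> nat \<Rightarrow> (nat \<times> nat \<Rightarrow> nat) set" where
  "datasets k s m = ({..<s} \<times> {..<m}) \<rightarrow>\<^sub>E {..<k}"

definition adjacent :: "nat \<Rightarrow> (nat \<times> nat \<Rightarrow> nat) \<Rightarrow> (nat \<times> nat \<Rightarrow> nat) \<Rightarrow> bool" where
  "adjacent s D D' = (\<exists>u<s. \<forall>i j. i \<noteq> u \<longrightarrow> D (i, j) = D' (i, j))"

definition dists :: "nat \<Rightarrow> nat pmf set" where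
  "dists k = {p. set_pmf p \<subseteq> {..<k}}"

definition est_simplex :: "nat \<Rightarrow> (nat \<Rightarrow> real) set" where
  "est_simplex k = {q. q \<in> {..<k} \<rightarrow>\<^sub>E UNIV \<and> (\<forall>i<k. 0 \<le> q i) \<and> (\<Sum>i<k. q i) = 1}"

definition out_space :: "nat \<Rightarrow> (nat \<Rightarrow> real) measure" where
  "out_space k = PiM {..<k} (\<lambda>_. (borel :: real measure))"

text \<open>An algorithm is a family (indexed by the number of users s) of randomized maps
  from datasets to (distributions of) estimates in the simplex.\<close>
definition valid_alg :: "nat \<Rightarrow> nat \<Rightarrow> (nat \<Rightarrow> (nat \<times> nat \<Rightarrow> nat) \<Rightarrow> (nat \<Rightarrow> real) measure) \<Rightarrow> bool" where
  "valid_alg k m A = (\<forall>s. \<forall>D\<in>datasets k s m.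
      prob_space (A s D) \<and> sets (A s D) = sets (out_space k) \<and> (AE q in A s D. q \<in> est_simplex k))"

definition diff_private :: "nat \<Rightarrow> nat \<Rightarrow> real \<Rightarrow> real \<Rightarrow>
    (nat \<Rightarrow> (nat \<times> nat \<Rightarrow> nat) \<Rightarrow> (nat \<Rightarrow> real) measure) \<Rightarrow> bool" where
  "diff_private k m \<epsilon> \<delta> A = (\<forall>s. \<forall>D\<in>datasets k s m. \<forall>D'\<in>datasets k s m. adjacent s D D' \<longrightarrow>
      (\<forall>S\<in>sets (out_space k). measure (A s D) S \<le> exp \<epsilon> * measure (A s D') S + \<delta>))"

definition data_pmf :: "nat pmf \<Rightarrow> nat \<Rightarrow> nat \<Rightarrow> (nat \<times> nat \<Rightarrow> nat) pmf" where
  "data_pmf p s m = Pi_pmf ({..<s} \<times> {..<m}) undefined (\<lambda>_. p)"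

definition loss :: "nat \<Rightarrow> (nat \<Rightarrow> (nat \<times> nat \<Rightarrow> nat) \<Rightarrow> (nat \<Rightarrow> real) measure) \<Rightarrow> nat \<Rightarrow> nat \<Rightarrow> nat pmf \<Rightarrow> ennreal" where
  "loss k A s m p = (\<integral>\<^sup>+ D. (\<integral>\<^sup>+ q. ennreal (\<Sum>i<k. \<bar>pmf p i - q i\<bar>) \<partial>(A s D)) \<partial>(measure_pmf (data_pmf p s m)))"

definition user_complexity :: "nat \<Rightarrow> nat \<Rightarrow> real \<Rightarrow>
    (nat \<Rightarrow> (nat \<times> nat \<Rightarrow> nat) \<Rightarrow> (nat \<Rightarrow> real) measure) \<Rightarrow> enat" where
  "user_complexity k m \<alpha> A = Inf (enat ` {s. (SUP p\<in>dists k. loss k A s m p) \<le> ennreal \<alpha>})"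

definition opt_user_complexity :: "nat \<Rightarrow> nat \<Rightarrow> real \<Rightarrow> real \<Rightarrow> real \<Rightarrow> enat" where
  "opt_user_complexity k m \<alpha> \<epsilon> \<delta> =
     (INF A\<in>{A. valid_alg k m A \<and> diff_private k m \<epsilon> \<delta> A}. user_complexity k m \<alpha> A)"

end

theory Submission
  imports Defs
begin

text \<open>The bound is witnessed by the perturbed uniform distributions \<open>pert_pmf h \<delta> v\<close>,
  \<open>v \<in> {0,1}\<^sup>h\<close>, \<open>h = k div 2\<close>: the symbols \<open>2 i\<close> and \<open>2 i + 1\<close> carry the masses
  \<open>(1 \<plusminus> \<delta>) / (2 h)\<close>, the sign chosen by \<open>v i\<close>. With \<open>\<delta>\<close> a constant multiple of \<open>\<alpha>\<close>, an estimator
  of expected \<open>\<ell>\<^sub>1\<close>-error \<open>\<alpha>\<close> must tell, for most \<open>i\<close>, which of the two symbols is heavier.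

  Statistical term: flipping one coordinate of \<open>v\<close> changes the distribution of all \<open>s m\<close> samples
  by at most \<open>sqrt ((1 + 6 \<delta>\<^sup>2 / h)\<^sup>s\<^sup>m - 1)\<close> in \<open>\<ell>\<^sub>1\<close> (via the chi-square divergence), so by
  Assouad's lemma \<open>s m\<close> must be of order \<open>h / \<alpha>\<^sup>2\<close>.

  Privacy term: for every \<open>v\<close> the estimate is, with probability at least \<open>3/4\<close>, near \<open>v\<close>, i.e.
  it decides at most \<open>h / 16\<close> pairs wrongly. Exchanging the users' data one user at a time for
  uniform data moves each user's data by at most \<open>2 sqrt m \<delta>\<close> in \<open>\<ell>\<^sub>1\<close>, so by \<open>\<epsilon>\<close>-differential
  privacy these probabilities shrink by at most \<open>exp (4 \<epsilon> sqrt m \<delta> s)\<close>. Under uniform data they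
  sum over all \<open>v\<close> to at most \<open>16\<^bsup>h/16\<^esup> (17/16)\<^sup>h\<close>, exponentially less than \<open>2\<^sup>h\<close>; hence \<open>\<epsilon> sqrt m \<alpha> s\<close>
  is of order \<open>h\<close>.\<close>

lemma sum_PiE_prod_eq_power:
  fixes g :: "'b \<Rightarrow> 'c::comm_semiring_1"
  assumes "finite I" "finite Y"
  shows "(\<Sum>D\<in>PiE I (\<lambda>_. Y). \<Prod>z\<in>I. g (D z)) = sum g Y ^ card I"
  using prod_sum_PiE[of I "\<lambda>_. Y" "\<lambda>_ y. g y"] assms by simp

lemma sum_PiE_split:
  fixes F :: "('a \<Rightarrow> 'b) \<Rightarrow> 'c::comm_monoid_add"
  assumes "finite I" "finite Y" and B: "B \<subseteq> I"
  shows "(\<Sum>D\<in>PiE I (\<lambda>_. Y). F D) =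
    (\<Sum>x\<in>PiE B (\<lambda>_. Y). \<Sum>R\<in>PiE (I-B) (\<lambda>_. Y). F (\<lambda>z. if z\<in>B then x z else R z))"
proof -
  have bij: "bij_betw (\<lambda>(x,R) z. if z\<in>B then x z else R z)
      (PiE B (\<lambda>_. Y) \<times> PiE (I-B) (\<lambda>_. Y)) (PiE I (\<lambda>_. Y))"
    by (rule bij_betw_byWitness[where f'="\<lambda>D. (restrict D B, restrict D (I-B))"])
       (use B in \<open>auto simp: restrict_def fun_eq_iff PiE_def extensional_def Pi_def\<close>)
  show ?thesis
    unfolding sum.reindex_bij_betw[OF bij, of F, symmetric]
    by (subst sum.cartesian_product) (auto intro!: sum.cong)
qed

lemma sum_abs_diff_le_two:
  fixes a b :: "'x \<Rightarrow> real"
  assumes "\<And>x. x \<in> X \<Longrightarrow> 0 \<le> a x" "\<And>x. x \<in> X \<Longrightarrow> 0 \<le> b x"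
    and "sum a X = 1" "sum b X = 1"
  shows "(\<Sum>x\<in>X. \<bar>a x - b x\<bar>) \<le> 2"
proof -
  have "(\<Sum>x\<in>X. \<bar>a x - b x\<bar>) \<le> (\<Sum>x\<in>X. a x + b x)"
    by (intro sum_mono) (use assms(1,2) in \<open>simp add: abs_le_iff\<close>)
  also have "\<dots> = 2"
    using assms(3,4) by (simp add: sum.distrib)
  finally show ?thesis .
qed

lemma sum_abs_diff_le_sqrt_chi2:
  fixes a b :: "'x \<Rightarrow> real"
  assumes "\<And>x. x \<in> X \<Longrightarrow> 0 \<le> a x" "\<And>x. x \<in> X \<Longrightarrow> 0 \<le> b x"
    and abs_cont: "\<And>x. x \<in> X \<Longrightarrow> b x = 0 \<Longrightarrow> a x = 0"
    and sa: "sum a X = 1" and sb: "sum b X = 1"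
  shows "(\<Sum>x\<in>X. \<bar>a x - b x\<bar>) \<le> sqrt ((\<Sum>x\<in>X. (a x)\<^sup>2 / b x) - 1)"
proof -
  \<comment> \<open>Cauchy--Schwarz with the factorisation \<open>\<bar>a - b\<bar> = (\<bar>a - b\<bar> / sqrt b) * sqrt b\<close>.\<close>
  have "(\<Sum>x\<in>X. \<bar>a x - b x\<bar>) = (\<Sum>x\<in>X. (\<bar>a x - b x\<bar> / sqrt (b x)) * sqrt (b x))"
    by (rule sum.cong) (use abs_cont in auto)
  then have "(\<Sum>x\<in>X. \<bar>a x - b x\<bar>)\<^sup>2
      \<le> (\<Sum>x\<in>X. (\<bar>a x - b x\<bar> / sqrt (b x))\<^sup>2) * (\<Sum>x\<in>X. (sqrt (b x))\<^sup>2)"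
    by (simp only: Cauchy_Schwarz_ineq_sum)
  also have "(\<Sum>x\<in>X. (sqrt (b x))\<^sup>2) = 1"
    using sb assms(2) by simp
  also have "(\<Sum>x\<in>X. (\<bar>a x - b x\<bar> / sqrt (b x))\<^sup>2) = (\<Sum>x\<in>X. (a x)\<^sup>2 / b x - 2 * a x + b x)"
  proof (rule sum.cong)
    fix x assume x: "x \<in> X"
    show "(\<bar>a x - b x\<bar> / sqrt (b x))\<^sup>2 = (a x)\<^sup>2 / b x - 2 * a x + b x"
    proof (cases "b x = 0")
      case False
      then have "b x > 0" using assms(2)[OF x] by simp
      then show ?thesis by (simp add: field_simps power2_eq_square)
    qed (use abs_cont x in simp)
  qed simp
  also have "\<dots> = (\<Sum>x\<in>X. (a x)\<^sup>2 / b x) - 1"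
    using sa sb by (simp add: sum.distrib sum_subtractf sum_distrib_left[symmetric])
  finally have "(\<Sum>x\<in>X. \<bar>a x - b x\<bar>)\<^sup>2 \<le> (\<Sum>x\<in>X. (a x)\<^sup>2 / b x) - 1"
    by simp
  then show ?thesis
    by (rule real_le_rsqrt)
qed

lemma sum_PiE_abs_diff_prod_le_chi2:
  fixes a b :: "'y \<Rightarrow> real"
  assumes fin: "finite I" "finite Y"
    and nn: "\<And>y. y \<in> Y \<Longrightarrow> 0 \<le> a y" "\<And>y. y \<in> Y \<Longrightarrow> 0 \<le> b y"
    and abs_cont: "\<And>y. y \<in> Y \<Longrightarrow> b y = 0 \<Longrightarrow> a y = 0"
    and "sum a Y = 1" "sum b Y = 1"
  shows "(\<Sum>D\<in>PiE I (\<lambda>_. Y). \<bar>(\<Prod>z\<in>I. a (D z)) - (\<Prod>z\<in>I. b (D z))\<bar>)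
          \<le> sqrt ((\<Sum>y\<in>Y. (a y)\<^sup>2 / b y) ^ card I - 1)"
proof -
  have "(\<Sum>D\<in>PiE I (\<lambda>_. Y). \<bar>(\<Prod>z\<in>I. a (D z)) - (\<Prod>z\<in>I. b (D z))\<bar>)
      \<le> sqrt ((\<Sum>D\<in>PiE I (\<lambda>_. Y). (\<Prod>z\<in>I. a (D z))\<^sup>2 / (\<Prod>z\<in>I. b (D z))) - 1)"
  proof (rule sum_abs_diff_le_sqrt_chi2)
    fix D assume D: "D \<in> PiE I (\<lambda>_. Y)"
    then show "0 \<le> (\<Prod>z\<in>I. a (D z))" "0 \<le> (\<Prod>z\<in>I. b (D z))"
      using nn by (auto intro!: prod_nonneg)
    show "(\<Prod>z\<in>I. a (D z)) = 0" if "(\<Prod>z\<in>I. b (D z)) = 0"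
      using that D abs_cont fin(1) by auto
  qed (use assms in \<open>simp_all add: sum_PiE_prod_eq_power\<close>)
  also have "(\<Sum>D\<in>PiE I (\<lambda>_. Y). (\<Prod>z\<in>I. a (D z))\<^sup>2 / (\<Prod>z\<in>I. b (D z)))
      = (\<Sum>y\<in>Y. (a y)\<^sup>2 / b y) ^ card I"
    using sum_PiE_prod_eq_power[OF fin, of "\<lambda>y. (a y)\<^sup>2 / b y"]
    by (simp add: prod_dividef prod_power_distrib)
  finally show ?thesis .
qed

lemma one_plus_power_le_exp:
  fixes x :: real
  assumes "0 \<le> x"
  shows "(1 + x) ^ n \<le> exp (n * x)"
proof -
  have "(1 + x) ^ n \<le> exp x ^ n"
    using assms by (intro power_mono) auto
  then show ?thesis
    by (simp add: exp_of_nat_mult)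
qed

lemma one_plus_power_sub_one_le:
  fixes x :: real
  assumes "0 \<le> x" "n * x \<le> 1"
  shows "(1 + x) ^ n - 1 \<le> 2 * (n * x)"
proof -
  have "(1 + x) ^ n \<le> exp (n * x)"
    by (rule one_plus_power_le_exp) fact
  also have "\<dots> \<le> 1 + n * x + (n * x)\<^sup>2"
    using assms by (intro exp_bound) auto
  finally have "(1 + x) ^ n \<le> 1 + n * x + (n * x)\<^sup>2" .
  moreover have "(n * x)\<^sup>2 \<le> n * x"
    unfolding power2_eq_square using assms by (intro mult_left_le_one_le) auto
  ultimately show ?thesis
    by linarith
qed


section \<open>Change of measure under differential privacy\<close>

lemma sum_mult_le_of_ratio_bound:
  fixes \<alpha> \<beta> g :: "'x \<Rightarrow> real"
  assumes X: "finite X" "X \<noteq> {}"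
    and \<beta>: "\<And>x. x \<in> X \<Longrightarrow> 0 \<le> \<beta> x" and sa: "sum \<alpha> X = 1" and sb: "sum \<beta> X = 1"
    and g: "\<And>x. x \<in> X \<Longrightarrow> 0 \<le> g x" and ratio: "\<And>x y. x \<in> X \<Longrightarrow> y \<in> X \<Longrightarrow> g x \<le> c * g y"
    and c: "1 \<le> c"
  shows "(\<Sum>x\<in>X. \<alpha> x * g x) \<le> (1 + (c - 1) * (\<Sum>x\<in>X. \<bar>\<alpha> x - \<beta> x\<bar>)) * (\<Sum>x\<in>X. \<beta> x * g x)"
proof -
  \<comment> \<open>Subtracting the minimum \<open>g x\<^sub>0\<close> leaves oscillation at most \<open>(c - 1) * g x\<^sub>0\<close>.\<close>
  obtain x\<^sub>0 where x\<^sub>0: "x\<^sub>0 \<in> X" and min: "\<And>x. x \<in> X \<Longrightarrow> g x\<^sub>0 \<le> g x"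
    using ex_is_arg_min_if_finite[OF X, of g] unfolding is_arg_min_linorder by blast
  have "g x\<^sub>0 = (\<Sum>x\<in>X. \<beta> x * g x\<^sub>0)"
    using sb by (simp add: sum_distrib_right[symmetric])
  also have "\<dots> \<le> (\<Sum>x\<in>X. \<beta> x * g x)"
    by (intro sum_mono mult_left_mono) (auto simp: min \<beta>)
  finally have min_le: "g x\<^sub>0 \<le> (\<Sum>x\<in>X. \<beta> x * g x)" .
  have "(\<Sum>x\<in>X. (\<alpha> x - \<beta> x) * (g x - g x\<^sub>0))
      = (\<Sum>x\<in>X. \<alpha> x * g x) - (\<Sum>x\<in>X. \<beta> x * g x) - g x\<^sub>0 * (sum \<alpha> X - sum \<beta> X)"
    by (simp add: algebra_simps sum_subtractf sum_distrib_left sum.distrib)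
  then have "(\<Sum>x\<in>X. \<alpha> x * g x) - (\<Sum>x\<in>X. \<beta> x * g x) = (\<Sum>x\<in>X. (\<alpha> x - \<beta> x) * (g x - g x\<^sub>0))"
    using sa sb by simp
  also have "\<dots> \<le> (\<Sum>x\<in>X. \<bar>\<alpha> x - \<beta> x\<bar> * ((c - 1) * g x\<^sub>0))"
  proof (intro sum_mono)
    fix x assume x: "x \<in> X"
    have "0 \<le> g x - g x\<^sub>0" "g x - g x\<^sub>0 \<le> (c - 1) * g x\<^sub>0"
      using min[OF x] ratio[OF x x\<^sub>0] by (simp_all add: algebra_simps)
    then show "(\<alpha> x - \<beta> x) * (g x - g x\<^sub>0) \<le> \<bar>\<alpha> x - \<beta> x\<bar> * ((c - 1) * g x\<^sub>0)"
      by (metis abs_ge_self abs_ge_zero mult_mono)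
  qed
  also have "\<dots> \<le> (\<Sum>x\<in>X. \<bar>\<alpha> x - \<beta> x\<bar>) * ((c - 1) * (\<Sum>x\<in>X. \<beta> x * g x))"
    unfolding sum_distrib_right[symmetric] using min_le c by (intro mult_left_mono) (auto simp: sum_nonneg)
  finally show ?thesis
    by (simp add: algebra_simps)
qed

lemma sum_PiE_prod_mult_le_of_ratio_bound:
  fixes a b :: "'y \<Rightarrow> real" and g :: "('z \<Rightarrow> 'y) \<Rightarrow> real"
  assumes B: "finite B" and Y: "finite Y" "Y \<noteq> {}"
    and a: "\<And>y. y \<in> Y \<Longrightarrow> 0 \<le> a y" "sum a Y = 1"
    and b: "\<And>y. y \<in> Y \<Longrightarrow> 0 \<le> b y" "sum b Y = 1"
    and g: "\<And>x. x \<in> PiE B (\<lambda>_. Y) \<Longrightarrow> 0 \<le> g x"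
    and ratio: "\<And>x y. x \<in> PiE B (\<lambda>_. Y) \<Longrightarrow> y \<in> PiE B (\<lambda>_. Y) \<Longrightarrow> g x \<le> c * g y"
    and c: "1 \<le> c"
    and dist: "(\<Sum>x\<in>PiE B (\<lambda>_. Y). \<bar>(\<Prod>z\<in>B. a (x z)) - (\<Prod>z\<in>B. b (x z))\<bar>) \<le> T"
  shows "(\<Sum>x\<in>PiE B (\<lambda>_. Y). (\<Prod>z\<in>B. a (x z)) * g x)
    \<le> (1 + (c - 1) * T) * (\<Sum>x\<in>PiE B (\<lambda>_. Y). (\<Prod>z\<in>B. b (x z)) * g x)"
proof -
  have "(\<Sum>x\<in>PiE B (\<lambda>_. Y). (\<Prod>z\<in>B. a (x z)) * g x)
      \<le> (1 + (c - 1) * (\<Sum>x\<in>PiE B (\<lambda>_. Y). \<bar>(\<Prod>z\<in>B. a (x z)) - (\<Prod>z\<in>B. b (x z))\<bar>))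
        * (\<Sum>x\<in>PiE B (\<lambda>_. Y). (\<Prod>z\<in>B. b (x z)) * g x)"
    by (rule sum_mult_le_of_ratio_bound)
       (use B Y a b g ratio c in \<open>auto simp: finite_PiE PiE_eq_empty_iff sum_PiE_prod_eq_power intro!: prod_nonneg\<close>)
  also have "\<dots> \<le> (1 + (c - 1) * T) * (\<Sum>x\<in>PiE B (\<lambda>_. Y). (\<Prod>z\<in>B. b (x z)) * g x)"
    using dist c b g
    by (intro mult_right_mono add_left_mono mult_left_mono sum_nonneg mult_nonneg_nonneg prod_nonneg)
       (auto simp: PiE_iff)
  finally show ?thesis .
qed

definition hybrid_weight ::
    "('y \<Rightarrow> real) \<Rightarrow> ('y \<Rightarrow> real) \<Rightarrow> (nat \<times> nat) set \<Rightarrow> nat set \<Rightarrow> (nat \<times> nat \<Rightarrow> 'y) \<Rightarrow> real" where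
  "hybrid_weight a b I J D = (\<Prod>z\<in>I. if fst z \<in> J then a (D z) else b (D z))"

lemma hybrid_weight_nonneg:
  assumes "\<And>y. y \<in> Y \<Longrightarrow> 0 \<le> a y" "\<And>y. y \<in> Y \<Longrightarrow> 0 \<le> b y" "D \<in> PiE I (\<lambda>_. Y)"
  shows "0 \<le> hybrid_weight a b I J D"
  unfolding hybrid_weight_def using assms PiE_mem[OF assms(3)] by (auto intro!: prod_nonneg)

lemma hybrid_weight_split:
  assumes "B \<subseteq> I" "finite I" and B: "\<And>z. z \<in> B \<Longrightarrow> fst z = u"
  shows "hybrid_weight a b I J D
    = (\<Prod>z\<in>B. if u \<in> J then a (D z) else b (D z)) * hybrid_weight a b (I - B) J D"
  unfolding hybrid_weight_def prod.subset_diff[OF assms(1,2)] using B by (simp add: mult.commute cong: prod.cong)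

lemma hybrid_weight_cong:
  assumes "\<And>z. z \<in> I \<Longrightarrow> D z = D' z" "\<And>z. z \<in> I \<Longrightarrow> fst z \<in> J \<longleftrightarrow> fst z \<in> J'"
  shows "hybrid_weight a b I J D = hybrid_weight a b I J' D'"
  unfolding hybrid_weight_def using assms by (intro prod.cong) auto

text \<open>Given the samples of the other users, \<open>f\<close> oscillates by at most the factor \<open>c\<close> in the
  samples of user \<open>u\<close>, so \<open>sum_PiE_prod_mult_le_of_ratio_bound\<close> applies to them.\<close>

lemma hybrid_step:
  fixes f :: "(nat \<times> nat \<Rightarrow> 'y) \<Rightarrow> real" and a b :: "'y \<Rightarrow> real"
    and s m :: nat
  defines "I \<equiv> {..<s} \<times> {..<m}"
  assumes Y: "finite Y" "Y \<noteq> {}"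
    and a: "\<And>y. y \<in> Y \<Longrightarrow> 0 \<le> a y" "sum a Y = 1"
    and b: "\<And>y. y \<in> Y \<Longrightarrow> 0 \<le> b y" "sum b Y = 1"
    and c: "1 \<le> c"
    and f: "\<And>D. D \<in> PiE I (\<lambda>_. Y) \<Longrightarrow> 0 \<le> f D"
    and f_ratio: "\<And>D D'. D \<in> PiE I (\<lambda>_. Y) \<Longrightarrow> D' \<in> PiE I (\<lambda>_. Y) \<Longrightarrow>
        (\<forall>i j. i \<noteq> u \<longrightarrow> D (i, j) = D' (i, j)) \<Longrightarrow> f D \<le> c * f D'"
    and user_dist: "(\<Sum>x\<in>PiE ({u} \<times> {..<m}) (\<lambda>_. Y).
        \<bar>(\<Prod>z\<in>{u} \<times> {..<m}. a (x z)) - (\<Prod>z\<in>{u} \<times> {..<m}. b (x z))\<bar>) \<le> T"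
    and u: "u < s" "u \<notin> J"
  shows "(\<Sum>D\<in>PiE I (\<lambda>_. Y). hybrid_weight a b I (insert u J) D * f D)
       \<le> (1 + (c - 1) * T) * (\<Sum>D\<in>PiE I (\<lambda>_. Y). hybrid_weight a b I J D * f D)"
proof -
  define B where "B = {u} \<times> {..<m}"
  define merge where "merge x R = (\<lambda>z. if z \<in> B then x z else R z)" for x R :: "nat \<times> nat \<Rightarrow> 'y"
  define \<rho> where "\<rho> R = hybrid_weight a b (I - B) J R" for R
  have BI: "B \<subseteq> I" and finI: "finite I" and finB: "finite B" and Bu: "\<And>z. z \<in> B \<Longrightarrow> fst z = u"
    using u unfolding B_def I_def by auto
  have merge_in: "merge x R \<in> PiE I (\<lambda>_. Y)" if "x \<in> PiE B (\<lambda>_. Y)" "R \<in> PiE (I - B) (\<lambda>_. Y)" for x R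
    using that BI unfolding merge_def by (auto simp: PiE_def extensional_def Pi_def)
  have split: "hybrid_weight a b I J' (merge x R) = (\<Prod>z\<in>B. if u \<in> J' then a (x z) else b (x z)) * \<rho> R"
    if "J' = J \<or> J' = insert u J" for J' x R
  proof -
    have "hybrid_weight a b I J' (merge x R) = (\<Prod>z\<in>B. if u \<in> J' then a (merge x R z) else b (merge x R z))
        * hybrid_weight a b (I - B) J' (merge x R)"
      by (rule hybrid_weight_split[OF BI finI Bu])
    also have "\<dots> = (\<Prod>z\<in>B. if u \<in> J' then a (x z) else b (x z)) * \<rho> R"
      unfolding \<rho>_def using that
      by (intro arg_cong2[where f = "(*)"] prod.cong hybrid_weight_cong) (auto simp: merge_def B_def I_def)
    finally show ?thesis .
  qed
  have step: "(\<Sum>x\<in>PiE B (\<lambda>_. Y). (\<Prod>z\<in>B. a (x z)) * f (merge x R))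
      \<le> (1 + (c - 1) * T) * (\<Sum>x\<in>PiE B (\<lambda>_. Y). (\<Prod>z\<in>B. b (x z)) * f (merge x R))"
    if R: "R \<in> PiE (I - B) (\<lambda>_. Y)" for R
  proof (rule sum_PiE_prod_mult_le_of_ratio_bound[OF finB Y a b])
    show "f (merge x R) \<le> c * f (merge y R)" if "x \<in> PiE B (\<lambda>_. Y)" "y \<in> PiE B (\<lambda>_. Y)" for x y
      using f_ratio[OF merge_in[OF that(1) R] merge_in[OF that(2) R]] by (auto simp: merge_def B_def)
  qed (use c f merge_in R user_dist in \<open>auto simp: B_def\<close>)
  have \<rho>: "0 \<le> \<rho> R" if "R \<in> PiE (I - B) (\<lambda>_. Y)" for R
    unfolding \<rho>_def by (rule hybrid_weight_nonneg[OF a(1) b(1) that])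
  have "(\<Sum>D\<in>PiE I (\<lambda>_. Y). hybrid_weight a b I (insert u J) D * f D)
      = (\<Sum>R\<in>PiE (I - B) (\<lambda>_. Y). \<rho> R * (\<Sum>x\<in>PiE B (\<lambda>_. Y). (\<Prod>z\<in>B. a (x z)) * f (merge x R)))"
    unfolding sum_PiE_split[OF finI Y(1) BI] merge_def[symmetric] split[OF disjI2[OF refl]]
    by (subst sum.swap) (simp add: sum_distrib_left algebra_simps)
  also have "\<dots> \<le> (\<Sum>R\<in>PiE (I - B) (\<lambda>_. Y).
      \<rho> R * ((1 + (c - 1) * T) * (\<Sum>x\<in>PiE B (\<lambda>_. Y). (\<Prod>z\<in>B. b (x z)) * f (merge x R))))"
    by (intro sum_mono mult_left_mono step \<rho>)
  also have "\<dots> = (1 + (c - 1) * T) * (\<Sum>D\<in>PiE I (\<lambda>_. Y). hybrid_weight a b I J D * f D)"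
    unfolding sum_PiE_split[OF finI Y(1) BI] merge_def[symmetric] split[OF disjI1[OF refl]]
    using u(2) by (subst sum.swap) (simp add: sum_distrib_left algebra_simps)
  finally show ?thesis .
qed

lemma hybrid_argument:
  fixes f :: "(nat \<times> nat \<Rightarrow> 'y) \<Rightarrow> real" and a b :: "'y \<Rightarrow> real"
    and s m :: nat
  defines "I \<equiv> {..<s} \<times> {..<m}"
  assumes Y: "finite Y" "Y \<noteq> {}"
    and a: "\<And>y. y \<in> Y \<Longrightarrow> 0 \<le> a y" "sum a Y = 1"
    and b: "\<And>y. y \<in> Y \<Longrightarrow> 0 \<le> b y" "sum b Y = 1"
    and c: "1 \<le> c" and T: "0 \<le> T"
    and f: "\<And>D. D \<in> PiE I (\<lambda>_. Y) \<Longrightarrow> 0 \<le> f D"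
    and f_ratio: "\<And>D D' u. D \<in> PiE I (\<lambda>_. Y) \<Longrightarrow> D' \<in> PiE I (\<lambda>_. Y) \<Longrightarrow> u < s \<Longrightarrow>
        (\<forall>i j. i \<noteq> u \<longrightarrow> D (i, j) = D' (i, j)) \<Longrightarrow> f D \<le> c * f D'"
    and user_dist: "\<And>u::nat. (\<Sum>x\<in>PiE ({u} \<times> {..<m}) (\<lambda>_. Y).
        \<bar>(\<Prod>z\<in>{u} \<times> {..<m}. a (x z)) - (\<Prod>z\<in>{u} \<times> {..<m}. b (x z))\<bar>) \<le> T"
  shows "(\<Sum>D\<in>PiE I (\<lambda>_. Y). (\<Prod>z\<in>I. a (D z)) * f D)
       \<le> (1 + (c - 1) * T) ^ s * (\<Sum>D\<in>PiE I (\<lambda>_. Y). (\<Prod>z\<in>I. b (D z)) * f D)"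
proof -
  have "J \<subseteq> {..<s} \<Longrightarrow> (\<Sum>D\<in>PiE I (\<lambda>_. Y). hybrid_weight a b I J D * f D)
      \<le> (1 + (c - 1) * T) ^ card J * (\<Sum>D\<in>PiE I (\<lambda>_. Y). hybrid_weight a b I {} D * f D)" for J
  proof (induction J rule: infinite_finite_induct)
    case (insert u J)
    have "(\<Sum>D\<in>PiE I (\<lambda>_. Y). hybrid_weight a b I (insert u J) D * f D)
        \<le> (1 + (c - 1) * T) * (\<Sum>D\<in>PiE I (\<lambda>_. Y). hybrid_weight a b I J D * f D)"
      unfolding I_def
      by (rule hybrid_step[OF Y a b c]) (use insert f f_ratio user_dist in \<open>auto simp: I_def\<close>)
    also have "\<dots> \<le> (1 + (c - 1) * T) * ((1 + (c - 1) * T) ^ card J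
        * (\<Sum>D\<in>PiE I (\<lambda>_. Y). hybrid_weight a b I {} D * f D))"
      using insert c T by (intro mult_left_mono) auto
    finally show ?case
      using insert by simp
  qed (use finite_subset in auto)
  from this[of "{..<s}"] have "(\<Sum>D\<in>PiE I (\<lambda>_. Y). hybrid_weight a b I {..<s} D * f D)
      \<le> (1 + (c - 1) * T) ^ s * (\<Sum>D\<in>PiE I (\<lambda>_. Y). hybrid_weight a b I {} D * f D)"
    by simp
  moreover have "hybrid_weight a b I {..<s} D = (\<Prod>z\<in>I. a (D z))" for D
    unfolding hybrid_weight_def I_def by (intro prod.cong) auto
  ultimately show ?thesis
    by (simp add: hybrid_weight_def[of a b I "{}"])
qed

section \<open>The perturbed uniform distributions\<close>

text \<open>The pair \<open>{2 i, 2 i + 1}\<close> has mass \<open>1 / h\<close>; the heavier symbol is \<open>2 i\<close> iff \<open>v i\<close>.\<close>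

definition pert :: "nat \<Rightarrow> real \<Rightarrow> (nat \<Rightarrow> bool) \<Rightarrow> nat \<Rightarrow> real" where
  "pert h \<delta> v j = (if j < 2 * h then (1 + (if v (j div 2) = even j then \<delta> else - \<delta>)) / (2 * h) else 0)"

lemma sum_lessThan_double:
  fixes f :: "nat \<Rightarrow> 'a::comm_monoid_add"
  shows "(\<Sum>j<2 * h. f j) = (\<Sum>i<h. f (2 * i) + f (2 * i + 1))"
  by (induction h) (auto simp: ac_simps)

lemma pert_nonneg: "\<bar>\<delta>\<bar> \<le> 1 \<Longrightarrow> 0 \<le> pert h \<delta> v j"
  unfolding pert_def by (auto intro!: divide_nonneg_pos)

lemma pert_pos: "j < 2 * h \<Longrightarrow> \<bar>\<delta>\<bar> < 1 \<Longrightarrow> 0 < pert h \<delta> v j"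
  unfolding pert_def by (auto intro!: divide_pos_pos)

lemma pert_pair_sum: "i < h \<Longrightarrow> pert h \<delta> v (2 * i) + pert h \<delta> v (2 * i + 1) = 1 / h"
  unfolding pert_def by (auto simp: field_simps)

lemma pert_pair_diff:
  "i < h \<Longrightarrow> pert h \<delta> v (2 * i) - pert h \<delta> v (2 * i + 1) = (if v i then \<delta> / h else - \<delta> / h)"
  unfolding pert_def by (auto simp: field_simps)

lemma pert_upd_other: "j div 2 \<noteq> i \<Longrightarrow> pert h \<delta> (v(i := b)) j = pert h \<delta> v j"
  unfolding pert_def by auto

lemma pert_zero_indep: "pert h 0 v = pert h 0 w"
  by (simp add: pert_def fun_eq_iff)

lemma sum_pert_pairs:
  assumes "2 * h \<le> k" "g 0 0 = 0"
  shows "(\<Sum>j<k. g (pert h \<delta> v j) (pert h \<delta>' w j)) = (\<Sum>i<h. g (pert h \<delta> v (2 * i)) (pert h \<delta>' w (2 * i))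
      + g (pert h \<delta> v (2 * i + 1)) (pert h \<delta>' w (2 * i + 1)))"
proof -
  have "(\<Sum>j<k. g (pert h \<delta> v j) (pert h \<delta>' w j)) = (\<Sum>j<2 * h. g (pert h \<delta> v j) (pert h \<delta>' w j))"
    using assms by (intro sum.mono_neutral_right) (auto simp: pert_def)
  then show ?thesis
    by (simp only: sum_lessThan_double)
qed

lemma sum_pert:
  assumes "1 \<le> h" "2 * h \<le> k"
  shows "(\<Sum>j<k. pert h \<delta> v j) = 1"
proof -
  have "(\<Sum>j<k. pert h \<delta> v j) = (\<Sum>i<h. pert h \<delta> v (2 * i) + pert h \<delta> v (2 * i + 1))"
    by (rule sum_pert_pairs[where g = "\<lambda>x y. x", OF assms(2)]) simp
  also have "\<dots> = (\<Sum>i<h. 1 / real h)"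
    by (intro sum.cong refl pert_pair_sum) simp
  finally show ?thesis
    using assms(1) by simp
qed

definition pert_pmf :: "nat \<Rightarrow> real \<Rightarrow> (nat \<Rightarrow> bool) \<Rightarrow> nat pmf" where
  "pert_pmf h \<delta> v = embed_pmf (pert h \<delta> v)"

lemma pmf_pert_pmf:
  assumes "1 \<le> h" "\<bar>\<delta>\<bar> \<le> 1"
  shows "pmf (pert_pmf h \<delta> v) = pert h \<delta> v"
proof -
  have "(\<integral>\<^sup>+x. ennreal (pert h \<delta> v x) \<partial>count_space UNIV) = (\<Sum>x<2 * h. ennreal (pert h \<delta> v x))"
    by (rule nn_integral_count_space') (auto simp: pert_def)
  also have "\<dots> = 1"
    using sum_pert[OF assms(1) order_refl, of \<delta> v] by (simp add: pert_nonneg assms(2))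
  finally show ?thesis
    unfolding pert_pmf_def fun_eq_iff by (intro allI pmf_embed_pmf) (simp_all add: pert_nonneg assms(2))
qed

lemma pert_pmf_in_dists:
  assumes "1 \<le> h" "\<bar>\<delta>\<bar> \<le> 1" "2 * h \<le> k"
  shows "pert_pmf h \<delta> v \<in> dists k"
  using assms unfolding dists_def by (auto simp: set_pmf_eq pmf_pert_pmf pert_def split: if_splits)

lemma chi2_pair_le:
  fixes \<delta> h :: real
  assumes \<delta>: "0 \<le> \<delta>" "\<delta> \<le> 1/2" and h: "0 < h"
  shows "((1 + \<delta>) / (2 * h))\<^sup>2 / ((1 - \<delta>) / (2 * h)) + ((1 - \<delta>) / (2 * h))\<^sup>2 / ((1 + \<delta>) / (2 * h))
    \<le> 1 / h + 6 * \<delta>\<^sup>2 / h"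
proof -
  have pos: "0 < 2 * h * (1 - \<delta>) * (1 + \<delta>)"
    using assms by simp
  have "((1 + \<delta>) / (2 * h))\<^sup>2 / ((1 - \<delta>) / (2 * h)) + ((1 - \<delta>) / (2 * h))\<^sup>2 / ((1 + \<delta>) / (2 * h))
      = ((1 + \<delta>) ^ 3 + (1 - \<delta>) ^ 3) / (2 * h * (1 - \<delta>) * (1 + \<delta>))"
  proof -
    have "(y / c)\<^sup>2 / (x / c) + (x / c)\<^sup>2 / (y / c) = (y ^ 3 + x ^ 3) / (c * x * y)"
      if "0 < x" "0 < y" "0 < c" for x y c :: real
      using that by (simp add: field_simps power2_eq_square power3_eq_cube)
    from this[of "1 - \<delta>" "1 + \<delta>" "2 * h"] show ?thesis
      using assms by (simp add: mult.assoc)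
  qed
  also have "\<dots> \<le> (1 + 6 * \<delta>\<^sup>2) / h * (2 * h * (1 - \<delta>) * (1 + \<delta>)) / (2 * h * (1 - \<delta>) * (1 + \<delta>))"
  proof (rule divide_right_mono)
    \<comment> \<open>Both sides are polynomials in \<open>\<delta>\<close>; the difference is \<open>4 \<delta>\<^sup>2 - 12 \<delta>\<^sup>4 \<ge> 0\<close>.\<close>
    have "\<delta>\<^sup>2 * \<delta>\<^sup>2 \<le> \<delta>\<^sup>2 * (1/4)"
      using \<delta> by (intro mult_left_mono) (auto simp: power2_eq_square intro: mult_mono[of \<delta> "1/2" \<delta> "1/2", simplified])
    moreover have "(1 + \<delta>) ^ 3 + (1 - \<delta>) ^ 3 = 2 + 6 * \<delta>\<^sup>2"
      by (simp add: power2_eq_square power3_eq_cube algebra_simps)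
    moreover have "(1 + 6 * \<delta>\<^sup>2) * (2 * (1 - \<delta>) * (1 + \<delta>)) = 2 + 10 * \<delta>\<^sup>2 - 12 * (\<delta>\<^sup>2 * \<delta>\<^sup>2)"
      by (simp add: power2_eq_square algebra_simps)
    moreover have "0 \<le> \<delta>\<^sup>2 * \<delta>\<^sup>2"
      by simp
    ultimately have "(1 + \<delta>) ^ 3 + (1 - \<delta>) ^ 3 \<le> (1 + 6 * \<delta>\<^sup>2) * (2 * (1 - \<delta>) * (1 + \<delta>))"
      by linarith
    moreover have "(1 + 6 * \<delta>\<^sup>2) / h * (2 * h * (1 - \<delta>) * (1 + \<delta>)) = (1 + 6 * \<delta>\<^sup>2) * (2 * (1 - \<delta>) * (1 + \<delta>))"
      using h by (simp add: field_simps)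
    ultimately show "(1 + \<delta>) ^ 3 + (1 - \<delta>) ^ 3 \<le> (1 + 6 * \<delta>\<^sup>2) / h * (2 * h * (1 - \<delta>) * (1 + \<delta>))"
      by simp
  qed (use pos in simp)
  also have "\<dots> = 1 / h + 6 * \<delta>\<^sup>2 / h"
    by (simp only: nonzero_mult_div_cancel_right[OF pos[THEN less_imp_neq, symmetric]] add_divide_distrib)
  finally show ?thesis .
qed

lemma chi2_pert_flip_le:
  assumes "2 * h \<le> k" and \<delta>: "0 \<le> \<delta>" "\<delta> \<le> 1/2" and i: "i < h" "v i"
  shows "(\<Sum>y<k. (pert h \<delta> v y)\<^sup>2 / pert h \<delta> (v(i := False)) y) \<le> 1 + 6 * \<delta>\<^sup>2 / h"
proof -
  define t where "t y = (pert h \<delta> v y)\<^sup>2 / pert h \<delta> (v(i := False)) y" for y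
  have "(\<Sum>y<k. t y) = (\<Sum>j<h. t (2 * j) + t (2 * j + 1))"
    unfolding t_def by (rule sum_pert_pairs[where g = "\<lambda>x y. x\<^sup>2 / y", OF assms(1)]) simp
  also have "\<dots> \<le> (\<Sum>j<h. 1 / h + (if j = i then 6 * \<delta>\<^sup>2 / h else 0))"
  proof (rule sum_mono)
    fix j assume j: "j \<in> {..<h}"
    show "t (2 * j) + t (2 * j + 1) \<le> 1 / h + (if j = i then 6 * \<delta>\<^sup>2 / h else 0)"
    proof (cases "j = i")
      case False
      have "0 < pert h \<delta> v (2 * j)" "0 < pert h \<delta> v (2 * j + 1)"
        using j \<delta> by (auto intro!: pert_pos)
      then show ?thesis
        using pert_pair_sum[of j h \<delta> v] j False
        by (simp add: t_def pert_upd_other power2_eq_square)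
    next
      case True
      have "pert h \<delta> v (2 * j) = (1 + \<delta>) / (2 * h)" "pert h \<delta> v (2 * j + 1) = (1 - \<delta>) / (2 * h)"
        "pert h \<delta> (v(i := False)) (2 * j) = (1 - \<delta>) / (2 * h)"
        "pert h \<delta> (v(i := False)) (2 * j + 1) = (1 + \<delta>) / (2 * h)"
        using True i j unfolding pert_def by auto
      then show ?thesis
        using chi2_pair_le[of \<delta> "real h"] True i \<delta> unfolding t_def by simp
    qed
  qed
  also have "\<dots> = 1 + 6 * \<delta>\<^sup>2 / h"
    using i by (simp add: sum.distrib)
  finally show ?thesis
    unfolding t_def .
qed

lemma chi2_pert_uniform:
  assumes "1 \<le> h" "2 * h \<le> k"
  shows "(\<Sum>y<k. (pert h \<delta> v y)\<^sup>2 / pert h 0 v y) = 1 + \<delta>\<^sup>2"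
proof -
  have "(\<Sum>y<k. (pert h \<delta> v y)\<^sup>2 / pert h 0 v y) = (\<Sum>j<h. (pert h \<delta> v (2 * j))\<^sup>2 / pert h 0 v (2 * j)
      + (pert h \<delta> v (2 * j + 1))\<^sup>2 / pert h 0 v (2 * j + 1))"
    by (rule sum_pert_pairs[where g = "\<lambda>x y. x\<^sup>2 / y", OF assms(2)]) simp
  also have "\<dots> = (\<Sum>j<h. (1 + \<delta>\<^sup>2) / h)"
  proof (rule sum.cong)
    fix j assume "j \<in> {..<h}"
    then have "(pert h \<delta> v (2 * j))\<^sup>2 / pert h 0 v (2 * j) + (pert h \<delta> v (2 * j + 1))\<^sup>2 / pert h 0 v (2 * j + 1)
        = (((1 + \<delta>) / (2 * h))\<^sup>2 + ((1 - \<delta>) / (2 * h))\<^sup>2) * (2 * h)"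
      by (cases "v j") (auto simp: pert_def algebra_simps)
    also have "\<dots> = (1 + \<delta>\<^sup>2) / h"
      using assms(1) by (simp add: power2_eq_square field_simps)
    finally show "(pert h \<delta> v (2 * j))\<^sup>2 / pert h 0 v (2 * j) + (pert h \<delta> v (2 * j + 1))\<^sup>2 / pert h 0 v (2 * j + 1)
        = (1 + \<delta>\<^sup>2) / h" .
  qed simp
  also have "\<dots> = 1 + \<delta>\<^sup>2"
    using assms(1) by simp
  finally show ?thesis .
qed

definition sample_weight :: "(nat \<Rightarrow> real) \<Rightarrow> nat \<Rightarrow> nat \<Rightarrow> (nat \<times> nat \<Rightarrow> nat) \<Rightarrow> real" where
  "sample_weight q s m D = (\<Prod>z\<in>{..<s} \<times> {..<m}. q (D z))"

lemma sum_sample_weight: "(\<Sum>D\<in>datasets k s m. sample_weight q s m D) = (\<Sum>y<k. q y) ^ (s * m)"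
  unfolding datasets_def sample_weight_def by (simp add: sum_PiE_prod_eq_power card_cartesian_product)

lemma sum_sample_weight_pert: "1 \<le> h \<Longrightarrow> 2 * h \<le> k \<Longrightarrow> (\<Sum>D\<in>datasets k s m. sample_weight (pert h \<delta> v) s m D) = 1"
  by (simp add: sum_sample_weight sum_pert)

lemma sample_weight_nonneg: "(\<And>y. 0 \<le> q y) \<Longrightarrow> 0 \<le> sample_weight q s m D"
  unfolding sample_weight_def by (simp add: prod_nonneg)

lemma l1_dist_pert_flip_le:
  assumes h: "1 \<le> h" "2 * h \<le> k" and \<delta>: "0 \<le> \<delta>" "\<delta> \<le> 1/2" and i: "i < h" "v i"
  shows "(\<Sum>D\<in>datasets k s m. \<bar>sample_weight (pert h \<delta> v) s m D - sample_weight (pert h \<delta> (v(i := False))) s m D\<bar>)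
     \<le> sqrt ((1 + 6 * \<delta>\<^sup>2 / h) ^ (s * m) - 1)"
proof -
  have "(\<Sum>D\<in>datasets k s m. \<bar>sample_weight (pert h \<delta> v) s m D - sample_weight (pert h \<delta> (v(i := False))) s m D\<bar>)
     \<le> sqrt ((\<Sum>y<k. (pert h \<delta> v y)\<^sup>2 / pert h \<delta> (v(i := False)) y) ^ card ({..<s} \<times> {..<m}) - 1)"
    unfolding datasets_def sample_weight_def
  proof (rule sum_PiE_abs_diff_prod_le_chi2)
    show "pert h \<delta> v y = 0" if "pert h \<delta> (v(i := False)) y = 0" for y
      using that pert_pos[of y h \<delta> "v(i := False)"] \<delta> by (auto simp: pert_def split: if_splits)
  qed (use \<delta> sum_pert[OF h] in \<open>auto simp: pert_nonneg\<close>)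
  also have "\<dots> = sqrt ((\<Sum>y<k. (pert h \<delta> v y)\<^sup>2 / pert h \<delta> (v(i := False)) y) ^ (s * m) - 1)"
    by (simp add: card_cartesian_product)
  also have "\<dots> \<le> sqrt ((1 + 6 * \<delta>\<^sup>2 / h) ^ (s * m) - 1)"
    using chi2_pert_flip_le[where v = v and i = i, OF h(2) \<delta> i] \<delta>
    by (intro real_sqrt_le_mono diff_right_mono power_mono sum_nonneg divide_nonneg_nonneg) (auto simp: pert_nonneg)
  finally show ?thesis .
qed

lemma l1_dist_pert_uniform_user_le:
  fixes m u :: nat
  assumes h: "1 \<le> h" "2 * h \<le> k" and \<delta>: "0 \<le> \<delta>" "\<delta> \<le> 1/2"
  shows "(\<Sum>x\<in>PiE ({u} \<times> {..<m}) (\<lambda>_. {..<k}).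
      \<bar>(\<Prod>z\<in>{u} \<times> {..<m}. pert h \<delta> v (x z)) - (\<Prod>z\<in>{u} \<times> {..<m}. pert h 0 v (x z))\<bar>)
     \<le> 2 * sqrt m * \<delta>"
    (is "?dist \<le> _")
proof -
  have nonneg: "0 \<le> pert h \<delta> v y" "0 \<le> pert h 0 v y" for y
    using \<delta> by (simp_all add: pert_nonneg)
  have abs_cont: "pert h \<delta> v y = 0" if "pert h 0 v y = 0" for y
    using that h by (simp add: pert_def split: if_splits)
  show ?thesis
  proof (cases "m * \<delta>\<^sup>2 \<le> 1")
    case True
    have "?dist \<le> sqrt ((\<Sum>y<k. (pert h \<delta> v y)\<^sup>2 / pert h 0 v y) ^ card ({u} \<times> {..<m}) - 1)"
      by (rule sum_PiE_abs_diff_prod_le_chi2) (simp_all add: nonneg abs_cont sum_pert[OF h])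
    also have "\<dots> = sqrt ((1 + \<delta>\<^sup>2) ^ m - 1)"
      by (simp add: chi2_pert_uniform[OF h] card_cartesian_product)
    also have "\<dots> \<le> sqrt ((2 * sqrt m * \<delta>)\<^sup>2)"
    proof (rule real_sqrt_le_mono)
      have "(1 + \<delta>\<^sup>2) ^ m - 1 \<le> 2 * (m * \<delta>\<^sup>2)"
        using True by (intro one_plus_power_sub_one_le) auto
      also have "\<dots> \<le> (2 * sqrt m * \<delta>)\<^sup>2"
        by (simp add: power_mult_distrib)
      finally show "(1 + \<delta>\<^sup>2) ^ m - 1 \<le> (2 * sqrt m * \<delta>)\<^sup>2" .
    qed
    finally show ?thesis
      using \<delta> by simp
  next
    case False
    then have "1 < sqrt (m * \<delta>\<^sup>2)"
      by simp
    also have "sqrt (m * \<delta>\<^sup>2) = sqrt m * \<delta>"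
      using \<delta> by (simp add: real_sqrt_mult)
    finally have "1 < sqrt m * \<delta>" .
    moreover have "?dist \<le> 2"
    proof (rule sum_abs_diff_le_two)
      show "(\<Sum>x\<in>PiE ({u} \<times> {..<m}) (\<lambda>_. {..<k}). \<Prod>z\<in>{u} \<times> {..<m}. pert h \<delta> v (x z)) = 1"
        "(\<Sum>x\<in>PiE ({u} \<times> {..<m}) (\<lambda>_. {..<k}). \<Prod>z\<in>{u} \<times> {..<m}. pert h 0 v (x z)) = 1"
        by (simp_all add: sum_PiE_prod_eq_power sum_pert[OF h])
    qed (simp_all add: prod_nonneg nonneg)
    ultimately show ?thesis
      by linarith
  qed
qed

section \<open>Estimation loss on the perturbed family\<close>

definition l1_err :: "nat \<Rightarrow> nat pmf \<Rightarrow> (nat \<Rightarrow> real) \<Rightarrow> real" where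
  "l1_err k p q = (\<Sum>i<k. \<bar>pmf p i - q i\<bar>)"

lemma valid_algD:
  assumes "valid_alg k m A" "D \<in> datasets k s m"
  shows "prob_space (A s D)" "sets (A s D) = sets (out_space k)"
  using assms unfolding valid_alg_def by auto

lemma loss_eq_sum_datasets:
  assumes p: "set_pmf p \<subseteq> {..<k}"
  shows "loss k A s m p = (\<Sum>D\<in>datasets k s m.
    (\<integral>\<^sup>+q. ennreal (l1_err k p q) \<partial>A s D) * ennreal (sample_weight (pmf p) s m D))"
proof -
  have "set_pmf (data_pmf p s m) = PiE_dflt ({..<s} \<times> {..<m}) undefined (set_pmf \<circ> (\<lambda>_. p))"
    unfolding data_pmf_def by (rule set_Pi_pmf) simp
  also have "\<dots> \<subseteq> datasets k s m"
    using p unfolding datasets_def PiE_dflt_def by (auto simp: PiE_def extensional_def Pi_def)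
  finally have "loss k A s m p = (\<Sum>D\<in>datasets k s m.
      (\<integral>\<^sup>+q. ennreal (l1_err k p q) \<partial>A s D) * ennreal (pmf (data_pmf p s m) D))"
    unfolding loss_def l1_err_def
    by (intro nn_integral_measure_pmf_support) (auto simp: datasets_def finite_PiE)
  also have "\<dots> = (\<Sum>D\<in>datasets k s m.
      (\<integral>\<^sup>+q. ennreal (l1_err k p q) \<partial>A s D) * ennreal (sample_weight (pmf p) s m D))"
    unfolding data_pmf_def datasets_def sample_weight_def
    by (intro sum.cong refl arg_cong2[where f = "(*)"] arg_cong[where f = ennreal] pmf_Pi')
       (auto simp: PiE_def extensional_def)
  finally show ?thesis .
qed

lemma sum_datasets_le_of_loss_le:
  assumes p: "set_pmf p \<subseteq> {..<k}"
    and X: "\<And>D. D \<in> datasets k s m \<Longrightarrow> 0 \<le> X D"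
    and X_le: "\<And>D. D \<in> datasets k s m \<Longrightarrow> ennreal (X D) \<le> (\<integral>\<^sup>+q. ennreal (l1_err k p q) \<partial>A s D)"
    and L: "loss k A s m p \<le> ennreal \<alpha>" and "0 \<le> \<alpha>"
  shows "(\<Sum>D\<in>datasets k s m. X D * sample_weight (pmf p) s m D) \<le> \<alpha>"
proof -
  have w: "0 \<le> sample_weight (pmf p) s m D" for D
    by (simp add: sample_weight_nonneg)
  have "ennreal (\<Sum>D\<in>datasets k s m. X D * sample_weight (pmf p) s m D)
      = (\<Sum>D\<in>datasets k s m. ennreal (X D * sample_weight (pmf p) s m D))"
    using X w by (intro sum_ennreal[symmetric]) simp
  also have "\<dots> = (\<Sum>D\<in>datasets k s m. ennreal (X D) * ennreal (sample_weight (pmf p) s m D))"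
    using X w by (intro sum.cong refl ennreal_mult)
  also have "\<dots> \<le> (\<Sum>D\<in>datasets k s m. (\<integral>\<^sup>+q. ennreal (l1_err k p q) \<partial>A s D)
      * ennreal (sample_weight (pmf p) s m D))"
    by (intro sum_mono mult_right_mono X_le) auto
  also have "\<dots> \<le> ennreal \<alpha>"
    using L by (simp add: loss_eq_sum_datasets[OF p])
  finally show ?thesis
    using \<open>0 \<le> \<alpha>\<close> by simp
qed

text \<open>A tie counts as wrong for exactly one value of \<open>v i\<close>, so the events for \<open>v\<close> and \<open>v(i := False)\<close>
  are complementary.\<close>

definition wrong_pair :: "(nat \<Rightarrow> bool) \<Rightarrow> nat \<Rightarrow> (nat \<Rightarrow> real) \<Rightarrow> bool" where
  "wrong_pair v i q = (if v i then q (2 * i) < q (2 * i + 1) else q (2 * i + 1) \<le> q (2 * i))"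

definition wrong_set :: "nat \<Rightarrow> (nat \<Rightarrow> bool) \<Rightarrow> nat \<Rightarrow> (nat \<Rightarrow> real) set" where
  "wrong_set k v i = {q \<in> space (out_space k). wrong_pair v i q}"

lemma measurable_out_space_component: "j < k \<Longrightarrow> (\<lambda>q. q j) \<in> borel_measurable (out_space k)"
  unfolding out_space_def by (rule measurable_component_singleton) simp

lemma pred_wrong_pair: "2 * i + 1 < k \<Longrightarrow> Measurable.pred (out_space k) (wrong_pair v i)"
  unfolding wrong_pair_def
  using measurable_out_space_component[of "2 * i" k] measurable_out_space_component[of "2 * i + 1" k]
  by (cases "v i") (simp_all add: borel_measurable_pred_less borel_measurable_le[unfolded Measurable.pred_def[symmetric]])

lemma wrong_set_sets: "2 * i + 1 < k \<Longrightarrow> wrong_set k v i \<in> sets (out_space k)"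
  using pred_wrong_pair unfolding wrong_set_def by (simp add: pred_def)

lemma measure_wrong_set_flip:
  assumes M: "prob_space M" "sets M = sets (out_space k)" and i: "2 * i + 1 < k" "v i"
  shows "measure M (wrong_set k (v(i := False)) i) = 1 - measure M (wrong_set k v i)"
proof -
  interpret prob_space M by fact
  have "wrong_set k (v(i := False)) i = space M - wrong_set k v i"
    using i sets_eq_imp_space_eq[OF M(2)] by (auto simp: wrong_set_def wrong_pair_def)
  then show ?thesis
    using prob_compl wrong_set_sets[OF i(1)] M(2) by simp
qed

lemma borel_measurable_card_wrong_pairs:
  assumes "2 * h \<le> k"
  shows "(\<lambda>q. real (card {i\<in>{..<h}. wrong_pair v i q})) \<in> borel_measurable (out_space k)"
proof -
  have "(\<lambda>q. real (card {i\<in>{..<h}. wrong_pair v i q})) = (\<lambda>q. \<Sum>i<h. if wrong_pair v i q then 1 else 0)"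
    by (simp add: sum.If_cases Int_def)
  also have "\<dots> \<in> borel_measurable (out_space k)"
    using assms wrong_set_sets unfolding wrong_set_def by (intro borel_measurable_sum measurable_If) auto
  finally show ?thesis .
qed

lemma card_wrong_pairs_le_l1_err:
  assumes h: "1 \<le> h" "2 * h \<le> k" and \<delta>: "0 \<le> \<delta>" "\<delta> \<le> 1"
  shows "\<delta> / h * card {i\<in>{..<h}. wrong_pair v i q} \<le> l1_err k (pert_pmf h \<delta> v) q"
proof -
  \<comment> \<open>A wrongly decided pair costs at least the gap \<open>\<delta> / h\<close> between its two true masses.\<close>
  have "\<delta> / h * card {i\<in>{..<h}. wrong_pair v i q} = (\<Sum>i<h. if wrong_pair v i q then \<delta> / h else 0)"
    by (simp add: sum.If_cases Int_def)
  also have "\<dots> \<le> (\<Sum>i<h. \<bar>pert h \<delta> v (2 * i) - q (2 * i)\<bar> + \<bar>pert h \<delta> v (2 * i + 1) - q (2 * i + 1)\<bar>)"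
  proof (rule sum_mono)
    fix i assume "i \<in> {..<h}"
    then show "(if wrong_pair v i q then \<delta> / h else 0)
        \<le> \<bar>pert h \<delta> v (2 * i) - q (2 * i)\<bar> + \<bar>pert h \<delta> v (2 * i + 1) - q (2 * i + 1)\<bar>"
      using pert_pair_diff[of i h \<delta> v] \<delta> by (auto simp: wrong_pair_def)
  qed
  also have "\<dots> = (\<Sum>j<2 * h. \<bar>pert h \<delta> v j - q j\<bar>)"
    by (rule sum_lessThan_double[symmetric])
  also have "\<dots> \<le> (\<Sum>j<k. \<bar>pert h \<delta> v j - q j\<bar>)"
    using h by (intro sum_mono2) auto
  also have "\<dots> = l1_err k (pert_pmf h \<delta> v) q"
    unfolding l1_err_def using \<delta> by (simp add: pmf_pert_pmf[OF h(1)])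
  finally show ?thesis .
qed

lemma nn_integral_l1_err_ge_wrong_pairs:
  assumes M: "prob_space M" "sets M = sets (out_space k)"
    and h: "1 \<le> h" "2 * h \<le> k" and \<delta>: "0 \<le> \<delta>" "\<delta> \<le> 1"
  shows "ennreal (\<delta> / h * (\<Sum>i<h. measure M (wrong_set k v i)))
    \<le> (\<integral>\<^sup>+q. ennreal (l1_err k (pert_pmf h \<delta> v) q) \<partial>M)"
proof -
  interpret prob_space M by fact
  have sets: "wrong_set k v i \<in> sets M" if "i < h" for i
    using that h M(2) by (auto intro!: wrong_set_sets)
  have "ennreal (\<delta> / h * (\<Sum>i<h. measure M (wrong_set k v i)))
      = (\<Sum>i<h. \<integral>\<^sup>+q. ennreal (\<delta> / h) * indicator (wrong_set k v i) q \<partial>M)"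
    using \<delta> sets by (simp add: sum_distrib_left emeasure_eq_measure ennreal_mult[symmetric]
        sum_ennreal[symmetric] nn_integral_cmult_indicator del: sum_ennreal)
  also have "\<dots> = (\<integral>\<^sup>+q. (\<Sum>i<h. ennreal (\<delta> / h) * indicator (wrong_set k v i) q) \<partial>M)"
    using sets by (intro nn_integral_sum[symmetric]) auto
  also have "\<dots> \<le> (\<integral>\<^sup>+q. ennreal (l1_err k (pert_pmf h \<delta> v) q) \<partial>M)"
  proof (rule nn_integral_mono)
    fix q
    have "(\<Sum>i<h. ennreal (\<delta> / h) * indicator (wrong_set k v i) q)
        = (\<Sum>i<h. ennreal (\<delta> / h * indicator (wrong_set k v i) q))"
      by (intro sum.cong refl) (simp add: indicator_def)
    also have "\<dots> = ennreal (\<Sum>i<h. \<delta> / h * indicator (wrong_set k v i) q)"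
      using \<delta> by (intro sum_ennreal) simp
    also have "\<dots> \<le> ennreal (l1_err k (pert_pmf h \<delta> v) q)"
    proof (rule ennreal_leI)
      have "(\<Sum>i<h. \<delta> / h * indicator (wrong_set k v i) q) \<le> (\<Sum>i<h. if wrong_pair v i q then \<delta> / h else 0)"
        using \<delta> by (intro sum_mono) (auto simp: indicator_def wrong_set_def)
      also have "\<dots> = \<delta> / h * card {i\<in>{..<h}. wrong_pair v i q}"
        by (simp add: sum.If_cases Int_def)
      also have "\<dots> \<le> l1_err k (pert_pmf h \<delta> v) q"
        by (rule card_wrong_pairs_le_l1_err[OF h \<delta>])
      finally show "(\<Sum>i<h. \<delta> / h * indicator (wrong_set k v i) q) \<le> l1_err k (pert_pmf h \<delta> v) q" .
    qed
    finally show "(\<Sum>i<h. ennreal (\<delta> / h) * indicator (wrong_set k v i) q) \<le> ennreal (l1_err k (pert_pmf h \<delta> v) q)" .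
  qed
  finally show ?thesis .
qed

section \<open>The statistical lower bound: Assouad's lemma\<close>

lemma le_cam_two_point:
  fixes P Q f :: "'x \<Rightarrow> real"
  assumes f: "\<And>x. x \<in> X \<Longrightarrow> 0 \<le> f x" "\<And>x. x \<in> X \<Longrightarrow> f x \<le> 1" and Q: "sum Q X = 1"
  shows "1 - (\<Sum>x\<in>X. \<bar>P x - Q x\<bar>) \<le> (\<Sum>x\<in>X. f x * P x) + (\<Sum>x\<in>X. (1 - f x) * Q x)"
proof -
  have "- (\<Sum>x\<in>X. \<bar>P x - Q x\<bar>) \<le> (\<Sum>x\<in>X. f x * (P x - Q x))"
    unfolding sum_negf[symmetric]
  proof (rule sum_mono)
    fix x assume "x \<in> X"
    then have "\<bar>f x * (P x - Q x)\<bar> \<le> \<bar>P x - Q x\<bar>"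
      using f by (simp add: abs_mult mult_left_le_one_le)
    then show "- \<bar>P x - Q x\<bar> \<le> f x * (P x - Q x)"
      by linarith
  qed
  moreover have "(\<Sum>x\<in>X. f x * P x) + (\<Sum>x\<in>X. (1 - f x) * Q x) = sum Q X + (\<Sum>x\<in>X. f x * (P x - Q x))"
    by (simp add: algebra_simps sum.distrib sum_subtractf)
  ultimately show ?thesis
    using Q by linarith
qed

definition cube :: "nat \<Rightarrow> (nat \<Rightarrow> bool) set" where
  "cube h = PiE {..<h} (\<lambda>_. UNIV)"

lemma finite_cube: "finite (cube h)"
  unfolding cube_def by (simp add: finite_PiE)

lemma card_cube: "card (cube h) = 2 ^ h"
  unfolding cube_def by (simp add: card_PiE)

lemma fun_upd_in_cube: "v \<in> cube h \<Longrightarrow> i < h \<Longrightarrow> v(i := b) \<in> cube h"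
  unfolding cube_def by (auto simp: PiE_def extensional_def)

lemma sum_cube_split:
  fixes g :: "(nat \<Rightarrow> bool) \<Rightarrow> 'a::comm_monoid_add"
  assumes i: "i < h"
  shows "(\<Sum>v\<in>cube h. g v) = (\<Sum>v\<in>{v\<in>cube h. v i}. g v + g (v(i := False)))"
proof -
  have bij: "bij_betw (\<lambda>v. v(i := False)) {v\<in>cube h. v i} {v\<in>cube h. \<not> v i}"
    by (rule bij_betw_byWitness[where f' = "\<lambda>v. v(i := True)"])
       (use i in \<open>auto simp: cube_def PiE_def extensional_def fun_upd_idem\<close>)
  have "(\<Sum>v\<in>cube h. g v) = (\<Sum>v\<in>{v\<in>cube h. v i}. g v) + (\<Sum>v\<in>{v\<in>cube h. \<not> v i}. g v)"
    using finite_cube by (subst sum.union_disjoint[symmetric]) (auto intro!: sum.cong)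
  also have "(\<Sum>v\<in>{v\<in>cube h. \<not> v i}. g v) = (\<Sum>v\<in>{v\<in>cube h. v i}. g (v(i := False)))"
    using sum.reindex_bij_betw[OF bij, of g] by simp
  finally show ?thesis
    by (simp add: sum.distrib)
qed

lemma sum_measure_wrong_sets_le:
  assumes A: "valid_alg k m A" and h: "1 \<le> h" "2 * h \<le> k" and \<delta>: "0 \<le> \<delta>" "\<delta> \<le> 1"
    and L: "(SUP p\<in>dists k. loss k A s m p) \<le> ennreal \<alpha>" and "0 \<le> \<alpha>"
  shows "(\<Sum>D\<in>datasets k s m.
    \<delta> / h * (\<Sum>i<h. measure (A s D) (wrong_set k v i)) * sample_weight (pert h \<delta> v) s m D) \<le> \<alpha>"
proof -
  have "\<bar>\<delta>\<bar> \<le> 1"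
    using \<delta> by simp
  note dist = pert_pmf_in_dists[OF h(1) this h(2)]
  have "(\<Sum>D\<in>datasets k s m.
      \<delta> / h * (\<Sum>i<h. measure (A s D) (wrong_set k v i)) * sample_weight (pmf (pert_pmf h \<delta> v)) s m D) \<le> \<alpha>"
  proof (rule sum_datasets_le_of_loss_le)
    show "loss k A s m (pert_pmf h \<delta> v) \<le> ennreal \<alpha>"
      using L dist by (meson SUP_upper order_trans)
  qed (use dist \<delta> \<open>0 \<le> \<alpha>\<close> nn_integral_l1_err_ge_wrong_pairs[OF valid_algD[OF A] h \<delta>] in
        \<open>auto simp: dists_def intro!: divide_nonneg_nonneg mult_nonneg_nonneg sum_nonneg\<close>)
  then show ?thesis
    by (simp add: pmf_pert_pmf[OF h(1) \<open>\<bar>\<delta>\<bar> \<le> 1\<close>])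
qed

text \<open>One coordinate of Assouad's lemma, via Le Cam's two-point bound.\<close>

lemma assouad_coordinate:
  fixes P :: "(nat \<Rightarrow> bool) \<Rightarrow> 'x \<Rightarrow> real" and E :: "(nat \<Rightarrow> bool) \<Rightarrow> 'x \<Rightarrow> real"
  assumes i: "i < h"
    and E: "\<And>v x. v \<in> cube h \<Longrightarrow> x \<in> X \<Longrightarrow> 0 \<le> E v x \<and> E v x \<le> 1"
    and E_flip: "\<And>v x. v \<in> cube h \<Longrightarrow> v i \<Longrightarrow> x \<in> X \<Longrightarrow> E (v(i := False)) x = 1 - E v x"
    and P: "\<And>v. v \<in> cube h \<Longrightarrow> sum (P v) X = 1"
    and P_flip: "\<And>v. v \<in> cube h \<Longrightarrow> v i \<Longrightarrow> (\<Sum>x\<in>X. \<bar>P v x - P (v(i := False)) x\<bar>) \<le> 1/2"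
  shows "card (cube h) / 4 \<le> (\<Sum>v\<in>cube h. \<Sum>x\<in>X. E v x * P v x)"
proof -
  have "real (card (cube h)) / 4 = (\<Sum>v\<in>{v\<in>cube h. v i}. 1/2)"
    using sum_cube_split[OF i, of "\<lambda>_. 1 :: real"] by simp
  also have "\<dots> \<le> (\<Sum>v\<in>{v\<in>cube h. v i}.
      (\<Sum>x\<in>X. E v x * P v x) + (\<Sum>x\<in>X. E (v(i := False)) x * P (v(i := False)) x))"
  proof (rule sum_mono)
    fix v assume v: "v \<in> {v\<in>cube h. v i}"
    have "1 - (\<Sum>x\<in>X. \<bar>P v x - P (v(i := False)) x\<bar>)
        \<le> (\<Sum>x\<in>X. E v x * P v x) + (\<Sum>x\<in>X. (1 - E v x) * P (v(i := False)) x)"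
      by (rule le_cam_two_point) (use E P fun_upd_in_cube v i in auto)
    also have "(\<Sum>x\<in>X. (1 - E v x) * P (v(i := False)) x) = (\<Sum>x\<in>X. E (v(i := False)) x * P (v(i := False)) x)"
      using E_flip v by (intro sum.cong) auto
    moreover have "(\<Sum>x\<in>X. \<bar>P v x - P (v(i := False)) x\<bar>) \<le> 1/2"
      using P_flip v by simp
    ultimately show "1/2 \<le> (\<Sum>x\<in>X. E v x * P v x) + (\<Sum>x\<in>X. E (v(i := False)) x * P (v(i := False)) x)"
      by linarith
  qed
  also have "\<dots> = (\<Sum>v\<in>cube h. \<Sum>x\<in>X. E v x * P v x)"
    by (rule sum_cube_split[OF i, symmetric])
  finally show ?thesis .
qed

lemma l1_dist_pert_flip_le_half:
  assumes h: "1 \<le> h" "2 * h \<le> k" and \<delta>: "0 \<le> \<delta>" "\<delta> \<le> 1/2" and i: "i < h" "v i"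
    and sm: "real (s * m) * (6 * \<delta>\<^sup>2 / h) \<le> 1/5"
  shows "(\<Sum>D\<in>datasets k s m. \<bar>sample_weight (pert h \<delta> v) s m D - sample_weight (pert h \<delta> (v(i := False))) s m D\<bar>)
     \<le> 1/2"
proof -
  have "(1 + 6 * \<delta>\<^sup>2 / h) ^ (s * m) \<le> exp (real (s * m) * (6 * \<delta>\<^sup>2 / h))"
    by (rule one_plus_power_le_exp) simp
  also have "\<dots> \<le> exp (1/5)"
    using sm by simp
  also have "\<dots> \<le> 1 + 1/5 + (1/5)\<^sup>2"
    by (rule exp_bound) auto
  finally have "(1 + 6 * \<delta>\<^sup>2 / h) ^ (s * m) - 1 \<le> (1/2)\<^sup>2"
    by (simp add: power2_eq_square)
  then have "sqrt ((1 + 6 * \<delta>\<^sup>2 / h) ^ (s * m) - 1) \<le> sqrt ((1/2)\<^sup>2)"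
    by (rule real_sqrt_le_mono)
  then have "sqrt ((1 + 6 * \<delta>\<^sup>2 / h) ^ (s * m) - 1) \<le> 1/2"
    by simp
  with l1_dist_pert_flip_le[where v = v and s = s and m = m, OF h \<delta> i] show ?thesis
    by linarith
qed

lemma sum_cube_measure_wrong_set_ge:
  assumes A: "valid_alg k m A" and h: "1 \<le> h" "2 * h \<le> k" and \<delta>: "0 \<le> \<delta>" "\<delta> \<le> 1/2" and i: "i < h"
    and sm: "real (s * m) * (6 * \<delta>\<^sup>2 / h) \<le> 1/5"
  shows "card (cube h) / 4 \<le> (\<Sum>v\<in>cube h. \<Sum>D\<in>datasets k s m.
    measure (A s D) (wrong_set k v i) * sample_weight (pert h \<delta> v) s m D)"
proof (rule assouad_coordinate[OF i])
  fix v D assume D: "D \<in> datasets k s m"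
  show "0 \<le> measure (A s D) (wrong_set k v i) \<and> measure (A s D) (wrong_set k v i) \<le> 1"
    using prob_space.prob_le_1[OF valid_algD(1)[OF A D]] by simp
  show "measure (A s D) (wrong_set k (v(i := False)) i) = 1 - measure (A s D) (wrong_set k v i)" if "v i"
    using measure_wrong_set_flip[OF valid_algD[OF A D]] that h i by simp
next
  fix v
  show "sum (sample_weight (pert h \<delta> v) s m) (datasets k s m) = 1"
    by (rule sum_sample_weight_pert[OF h])
  show "(\<Sum>D\<in>datasets k s m. \<bar>sample_weight (pert h \<delta> v) s m D - sample_weight (pert h \<delta> (v(i := False))) s m D\<bar>)
      \<le> 1/2" if "v i"
    by (rule l1_dist_pert_flip_le_half[where v = v, OF h \<delta> i that sm])
qed

lemma users_samples_lower_bound: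
  assumes k: "2 \<le> k" and A: "valid_alg k m A" and \<alpha>: "0 < \<alpha>" "\<alpha> \<le> 1/16"
    and L: "(SUP p\<in>dists k. loss k A s m p) \<le> ennreal \<alpha>"
  shows "real (k div 2) / (1920 * \<alpha>\<^sup>2) < real (s * m)"
proof (rule ccontr)
  define h where "h = k div 2"
  define \<delta> where "\<delta> = 8 * \<alpha>"
  define P where "P v = sample_weight (pert h \<delta> v) s m" for v
  define E where "E v i D = measure (A s D) (wrong_set k v i)" for v i D
  assume few_samples: "\<not> ?thesis"
  have h: "1 \<le> h" "2 * h \<le> k" and \<delta>: "0 \<le> \<delta>" "\<delta> \<le> 1/2"
    using k \<alpha> unfolding h_def \<delta>_def by auto
  have sm: "real (s * m) * (6 * \<delta>\<^sup>2 / h) \<le> 1/5"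
  proof -
    have "real (s * m) * (6 * \<delta>\<^sup>2 / h) \<le> h / (1920 * \<alpha>\<^sup>2) * (6 * \<delta>\<^sup>2 / h)"
      using few_samples unfolding h_def by (intro mult_right_mono) auto
    also have "\<dots> = 1/5"
      using \<alpha> h unfolding \<delta>_def by (simp add: field_simps power2_eq_square)
    finally show ?thesis .
  qed
  have coordinate: "card (cube h) / 4 \<le> (\<Sum>v\<in>cube h. \<Sum>D\<in>datasets k s m. E v i D * P v D)"
    if "i < h" for i
    unfolding E_def P_def by (rule sum_cube_measure_wrong_set_ge[OF A h \<delta> that sm])
  have loss: "(\<Sum>D\<in>datasets k s m. \<delta> / h * (\<Sum>i<h. E v i D) * P v D) \<le> \<alpha>" for v
    unfolding E_def P_def using \<alpha> \<delta> by (intro sum_measure_wrong_sets_le[OF A h _ _ L]) auto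
  have "\<delta> / h * (h * (card (cube h) / 4)) \<le> \<delta> / h * (\<Sum>i<h. \<Sum>v\<in>cube h. \<Sum>D\<in>datasets k s m. E v i D * P v D)"
    using \<delta> sum_mono[of "{..<h}" "\<lambda>_. card (cube h) / 4", OF coordinate] by (intro mult_left_mono) auto
  also have "\<dots> = (\<Sum>v\<in>cube h. \<Sum>D\<in>datasets k s m. \<delta> / h * (\<Sum>i<h. E v i D) * P v D)"
    by (simp add: sum_distrib_left sum_distrib_right sum.swap[of _ "{..<h}"] algebra_simps)
  also have "\<dots> \<le> (\<Sum>v\<in>cube h. \<alpha>)"
    by (intro sum_mono loss)
  finally have "\<delta> / 4 \<le> \<alpha>"
    using h by (simp add: card_cube field_simps)
  then show False
    using \<alpha> unfolding \<delta>_def by simp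
qed

section \<open>The privacy lower bound: packing\<close>

definition near_set :: "nat \<Rightarrow> nat \<Rightarrow> (nat \<Rightarrow> bool) \<Rightarrow> (nat \<Rightarrow> real) set" where
  "near_set k h v = {q \<in> space (out_space k). card {i\<in>{..<h}. wrong_pair v i q} \<le> h div 16}"

lemma near_set_sets:
  assumes "2 * h \<le> k"
  shows "near_set k h v \<in> sets (out_space k)"
proof -
  have "near_set k h v = {q \<in> space (out_space k). real (card {i\<in>{..<h}. wrong_pair v i q}) \<le> real (h div 16)}"
    unfolding near_set_def by simp
  also have "\<dots> \<in> sets (out_space k)"
    using borel_measurable_card_wrong_pairs[OF assms, of v] by measurable
  finally show ?thesis .
qed

lemma nn_integral_l1_err_ge_far:
  assumes M: "prob_space M" "sets M = sets (out_space k)"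
    and h: "1 \<le> h" "2 * h \<le> k" and \<delta>: "0 \<le> \<delta>" "\<delta> \<le> 1"
  shows "ennreal (\<delta> / 16 * (1 - measure M (near_set k h v)))
    \<le> (\<integral>\<^sup>+q. ennreal (l1_err k (pert_pmf h \<delta> v) q) \<partial>M)"
proof -
  interpret prob_space M by fact
  have sets: "near_set k h v \<in> sets M"
    using near_set_sets[OF h(2)] M(2) by simp
  have "ennreal (\<delta> / 16 * (1 - measure M (near_set k h v)))
      = (\<integral>\<^sup>+q. ennreal (\<delta> / 16) * indicator (space M - near_set k h v) q \<partial>M)"
    using \<delta> sets by (simp add: nn_integral_cmult_indicator emeasure_eq_measure prob_compl ennreal_mult[symmetric])
  also have "\<dots> \<le> (\<integral>\<^sup>+q. ennreal (l1_err k (pert_pmf h \<delta> v) q) \<partial>M)"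
  proof (rule nn_integral_mono)
    fix q
    show "ennreal (\<delta> / 16) * indicator (space M - near_set k h v) q \<le> ennreal (l1_err k (pert_pmf h \<delta> v) q)"
    proof (cases "q \<in> space M - near_set k h v")
      case True
      then have "real h / 16 \<le> card {i\<in>{..<h}. wrong_pair v i q}"
        using sets_eq_imp_space_eq[OF M(2)] unfolding near_set_def by auto
      then have "\<delta> / 16 \<le> \<delta> / h * card {i\<in>{..<h}. wrong_pair v i q}"
        using h \<delta> by (simp add: field_simps mult_left_mono)
      also have "\<dots> \<le> l1_err k (pert_pmf h \<delta> v) q"
        by (rule card_wrong_pairs_le_l1_err[OF h \<delta>])
      finally show ?thesis
        using True by (simp add: ennreal_leI)
    qed simp
  qed
  finally show ?thesis .
qed

text \<open>Each estimate is near few hypotheses: weighting \<open>v\<close> by \<open>16\<close> to the power minus the number of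
  pairs decided wrongly, the weights of all \<open>v \<in> cube h\<close> factorise and sum to \<open>(17/16)\<^sup>h\<close>, because
  for every pair exactly one of the two values of \<open>v i\<close> is decided wrongly.\<close>

lemma sum_indicator_near_set_le:
  "(\<Sum>v\<in>cube h. indicator (near_set k h v) q) \<le> (16::real) ^ (h div 16) * (17/16) ^ h"
proof -
  define r where "r = h div 16"
  define g where "g i b = (if wrong_pair (\<lambda>_. b) i q then 1/16 else (1::real))" for i b
  have point: "indicator (near_set k h v) q \<le> 16 ^ r * (\<Prod>i<h. g i (v i))" for v
  proof -
    have "(\<Prod>i<h. g i (v i)) = (\<Prod>i\<in>{i\<in>{..<h}. wrong_pair v i q}. 1/16)"
      by (subst prod.inter_filter) (auto simp: g_def wrong_pair_def intro!: prod.cong)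
    then have weight: "(\<Prod>i<h. g i (v i)) = (1/16) ^ card {i\<in>{..<h}. wrong_pair v i q}"
      by simp
    show ?thesis
    proof (cases "q \<in> near_set k h v")
      case True
      then have "(1/16 :: real) ^ r \<le> (1/16) ^ card {i\<in>{..<h}. wrong_pair v i q}"
        unfolding near_set_def r_def by (intro power_decreasing) auto
      then have "1 \<le> 16 ^ r * (1/16 :: real) ^ card {i\<in>{..<h}. wrong_pair v i q}"
        by (simp add: field_simps)
      then show ?thesis
        using True weight by simp
    qed (auto simp: g_def intro!: mult_nonneg_nonneg prod_nonneg)
  qed
  have "(\<Sum>v\<in>cube h. indicator (near_set k h v) q) \<le> (\<Sum>v\<in>cube h. 16 ^ r * (\<Prod>i<h. g i (v i)))"
    by (intro sum_mono point)
  also have "\<dots> = 16 ^ r * (\<Prod>i<h. \<Sum>b\<in>UNIV. g i b)"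
    unfolding cube_def sum_distrib_left[symmetric] by (subst prod_sum_PiE) auto
  also have "(\<Prod>i<h. \<Sum>b\<in>UNIV. g i b) = (\<Prod>i<h. 17/16)"
    by (intro prod.cong) (auto simp: UNIV_bool g_def wrong_pair_def)
  finally show ?thesis
    unfolding r_def by simp
qed

lemma sum_measure_near_set_le:
  assumes M: "prob_space M" "sets M = sets (out_space k)" and h: "2 * h \<le> k"
  shows "(\<Sum>v\<in>cube h. measure M (near_set k h v)) \<le> (16::real) ^ (h div 16) * (17/16) ^ h"
proof -
  interpret prob_space M by fact
  have sets: "near_set k h v \<in> sets M" for v
    using near_set_sets[OF h] M(2) by simp
  have "ennreal (\<Sum>v\<in>cube h. measure M (near_set k h v)) = (\<Sum>v\<in>cube h. \<integral>\<^sup>+q. indicator (near_set k h v) q \<partial>M)"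
    using sets by (simp add: emeasure_eq_measure sum_ennreal[symmetric] del: sum_ennreal)
  also have "\<dots> = (\<integral>\<^sup>+q. (\<Sum>v\<in>cube h. indicator (near_set k h v) q) \<partial>M)"
    using sets by (intro nn_integral_sum[symmetric]) auto
  also have "\<dots> \<le> (\<integral>\<^sup>+q. ennreal ((16::real) ^ (h div 16) * (17/16) ^ h) \<partial>M)"
  proof (rule nn_integral_mono)
    fix q
    have "(\<Sum>v\<in>cube h. indicator (near_set k h v) q :: ennreal) = (\<Sum>v\<in>cube h. ennreal (indicator (near_set k h v) q))"
      by (intro sum.cong) (auto simp: indicator_def)
    also have "\<dots> = ennreal (\<Sum>v\<in>cube h. indicator (near_set k h v) q)"
      by (intro sum_ennreal) auto
    finally show "(\<Sum>v\<in>cube h. indicator (near_set k h v) q :: ennreal) \<le> ennreal ((16::real) ^ (h div 16) * (17/16) ^ h)"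
      using sum_indicator_near_set_le[where h = h and k = k and q = q] by (simp add: ennreal_leI)
  qed
  also have "\<dots> = ennreal ((16::real) ^ (h div 16) * (17/16) ^ h)"
    by (simp add: emeasure_space_1)
  finally show ?thesis
    by simp
qed

lemma sum_cube_measure_near_set_le:
  assumes A: "valid_alg k m A" and h: "2 * h \<le> k"
    and w: "\<And>D. 0 \<le> w D" "(\<Sum>D\<in>datasets k s m. w D) = 1"
  shows "(\<Sum>v\<in>cube h. \<Sum>D\<in>datasets k s m. w D * measure (A s D) (near_set k h v))
    \<le> (16::real) ^ (h div 16) * (17/16) ^ h"
proof -
  have "(\<Sum>v\<in>cube h. \<Sum>D\<in>datasets k s m. w D * measure (A s D) (near_set k h v))
      = (\<Sum>D\<in>datasets k s m. w D * (\<Sum>v\<in>cube h. measure (A s D) (near_set k h v)))"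
    by (simp add: sum_distrib_left sum.swap[of _ "cube h"])
  also have "\<dots> \<le> (\<Sum>D\<in>datasets k s m. w D * ((16::real) ^ (h div 16) * (17/16) ^ h))"
    by (intro sum_mono mult_left_mono sum_measure_near_set_le[OF valid_algD[OF A] h] w(1))
  also have "\<dots> = (16::real) ^ (h div 16) * (17/16) ^ h"
    using w(2) by (simp add: sum_distrib_right[symmetric])
  finally show ?thesis .
qed

lemma sum_measure_near_set_ge:
  assumes A: "valid_alg k m A" and h: "1 \<le> h" "2 * h \<le> k" and \<delta>: "0 \<le> \<delta>" "\<delta> \<le> 1"
    and L: "(SUP p\<in>dists k. loss k A s m p) \<le> ennreal \<alpha>" and "0 \<le> \<alpha>"
  shows "\<delta> / 16 * (1 - (\<Sum>D\<in>datasets k s m. sample_weight (pert h \<delta> v) s m D * measure (A s D) (near_set k h v)))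
    \<le> \<alpha>"
proof -
  have "\<bar>\<delta>\<bar> \<le> 1"
    using \<delta> by simp
  note dist = pert_pmf_in_dists[OF h(1) this h(2)]
  have "(\<Sum>D\<in>datasets k s m. \<delta> / 16 * (1 - measure (A s D) (near_set k h v))
      * sample_weight (pmf (pert_pmf h \<delta> v)) s m D) \<le> \<alpha>"
  proof (rule sum_datasets_le_of_loss_le)
    show "loss k A s m (pert_pmf h \<delta> v) \<le> ennreal \<alpha>"
      using L dist by (meson SUP_upper order_trans)
    show "0 \<le> \<delta> / 16 * (1 - measure (A s D) (near_set k h v))" if "D \<in> datasets k s m" for D
      using \<delta> prob_space.prob_le_1[OF valid_algD(1)[OF A that]] by simp
  qed (use dist \<open>0 \<le> \<alpha>\<close> nn_integral_l1_err_ge_far[OF valid_algD[OF A] h \<delta>] in \<open>auto simp: dists_def\<close>)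
  also have "(\<Sum>D\<in>datasets k s m. \<delta> / 16 * (1 - measure (A s D) (near_set k h v))
      * sample_weight (pmf (pert_pmf h \<delta> v)) s m D)
    = \<delta> / 16 * (\<Sum>D\<in>datasets k s m. sample_weight (pert h \<delta> v) s m D)
      - \<delta> / 16 * (\<Sum>D\<in>datasets k s m. sample_weight (pert h \<delta> v) s m D * measure (A s D) (near_set k h v))"
    by (simp add: pmf_pert_pmf[OF h(1) \<open>\<bar>\<delta>\<bar> \<le> 1\<close>] sum_distrib_left sum_subtractf algebra_simps)
  finally show ?thesis
    by (simp add: sum_sample_weight_pert[OF h] right_diff_distrib)
qed

lemma private_change_of_measure:
  fixes a b :: "nat \<Rightarrow> real"
  assumes A: "valid_alg k m A" "diff_private k m \<epsilon> 0 A" and \<epsilon>: "0 \<le> \<epsilon>"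
    and S: "S \<in> sets (out_space k)" and k: "0 < k"
    and a: "\<And>y. 0 \<le> a y" "(\<Sum>y<k. a y) = 1" and b: "\<And>y. 0 \<le> b y" "(\<Sum>y<k. b y) = 1"
    and user_dist: "\<And>u::nat. (\<Sum>x\<in>PiE ({u} \<times> {..<m}) (\<lambda>_. {..<k}).
        \<bar>(\<Prod>z\<in>{u} \<times> {..<m}. a (x z)) - (\<Prod>z\<in>{u} \<times> {..<m}. b (x z))\<bar>) \<le> T"
  shows "(\<Sum>D\<in>datasets k s m. sample_weight a s m D * measure (A s D) S)
    \<le> (1 + (exp \<epsilon> - 1) * T) ^ s * (\<Sum>D\<in>datasets k s m. sample_weight b s m D * measure (A s D) S)"
  unfolding datasets_def sample_weight_def
proof (rule hybrid_argument)
  show "0 \<le> T"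
    using user_dist[of 0] by (meson order_trans sum_nonneg abs_ge_zero)
  show "measure (A s D) S \<le> exp \<epsilon> * measure (A s D') S"
    if "D \<in> PiE ({..<s} \<times> {..<m}) (\<lambda>_. {..<k})" "D' \<in> PiE ({..<s} \<times> {..<m}) (\<lambda>_. {..<k})"
      "u < s" "\<forall>i j. i \<noteq> u \<longrightarrow> D (i, j) = D' (i, j)" for D D' u
  proof -
    have "adjacent s D D'"
      unfolding adjacent_def using that(3,4) by blast
    then show ?thesis
      using A(2) that(1,2) S unfolding diff_private_def datasets_def by auto
  qed
qed (use a b \<epsilon> k user_dist in \<open>auto simp: lessThan_empty_iff\<close>)

lemma dp_factor_power_le_exp:
  fixes \<epsilon> T :: real
  assumes \<epsilon>: "0 < \<epsilon>" "\<epsilon> \<le> 1" and T: "0 \<le> T"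
  shows "(1 + (exp \<epsilon> - 1) * T) ^ s \<le> exp (2 * \<epsilon> * T * s)"
proof -
  have "exp \<epsilon> \<le> 1 + \<epsilon> + \<epsilon>\<^sup>2"
    using \<epsilon> by (intro exp_bound) auto
  moreover have "\<epsilon>\<^sup>2 \<le> \<epsilon>"
    using \<epsilon> by (simp add: power2_eq_square mult_left_le_one_le)
  ultimately have "(exp \<epsilon> - 1) * T \<le> 2 * \<epsilon> * T"
    using T by (intro mult_right_mono) auto
  have "(1 + (exp \<epsilon> - 1) * T) ^ s \<le> exp (s * ((exp \<epsilon> - 1) * T))"
    using \<epsilon> T by (intro one_plus_power_le_exp) simp
  also have "\<dots> \<le> exp (2 * \<epsilon> * T * s)"
    using \<open>(exp \<epsilon> - 1) * T \<le> 2 * \<epsilon> * T\<close> by (simp add: mult_left_mono mult.commute)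
  finally show ?thesis .
qed

lemma packing_bound_arith:
  fixes X :: real
  assumes h: "1 \<le> h" and packing: "3/4 * 2 ^ h \<le> exp X * (16 ^ (h div 16) * (17/16) ^ h)"
  shows "real h / 10 \<le> X"
proof -
  have "ln (3/4 * 2 ^ h) \<le> ln (exp X * (16 ^ (h div 16) * (17/16) ^ h))"
    using packing by (subst ln_le_cancel_iff) auto
  moreover have "ln (3/4 * 2 ^ h) = ln (3/4) + h * ln (2 :: real)"
    by (subst ln_mult) (auto simp: ln_realpow)
  moreover have "ln (exp X * (16 ^ (h div 16) * (17/16) ^ h)) = X + ((h div 16) * ln 16 + h * ln (17/16 :: real))"
    by (simp add: ln_mult ln_realpow)
  ultimately have "ln (3/4) + h * ln 2 \<le> X + (h div 16) * ln 16 + h * ln (17/16 :: real)"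
    by simp
  moreover have "ln (3/4 :: real) = - ln (4/3)"
    by (simp add: ln_div)
  moreover have "ln (4/3 :: real) \<le> 1/3" "ln (17/16 :: real) \<le> 1/16"
    using ln_le_minus_one[of "4/3 :: real"] ln_le_minus_one[of "17/16 :: real"] by simp_all
  moreover have "real (h div 16) * ln 16 \<le> h / 16 * (4 * ln 2)"
  proof -
    have "ln (16::real) = 4 * ln 2"
      using ln_realpow[of 2 4] by simp
    moreover have "real (h div 16) \<le> h / 16"
      by linarith
    ultimately show ?thesis
      using ln2_ge_two_thirds by (simp add: mult_right_mono)
  qed
  moreover have "h * ln (17/16 :: real) \<le> h * (1/16)" "h * (1/2) \<le> h * (3/4 * ln (2 :: real))"
    using \<open>ln (17/16 :: real) \<le> 1/16\<close> ln2_ge_two_thirds by (intro mult_left_mono; simp)+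
  ultimately show ?thesis
    using h by linarith
qed

lemma users_privacy_lower_bound:
  assumes k: "2 \<le> k" and A: "valid_alg k m A" "diff_private k m \<epsilon> 0 A"
    and \<alpha>: "0 < \<alpha>" "\<alpha> \<le> 1/128" and \<epsilon>: "0 < \<epsilon>" "\<epsilon> \<le> 1"
    and L: "(SUP p\<in>dists k. loss k A s m p) \<le> ennreal \<alpha>"
  shows "real (k div 2) \<le> 2560 * sqrt m * \<alpha> * \<epsilon> * s"
proof -
  define h where "h = k div 2"
  define \<delta> where "\<delta> = 64 * \<alpha>"
  define T where "T = 2 * sqrt m * \<delta>"
  define Bnd where "Bnd = (16::real) ^ (h div 16) * (17/16) ^ h"
  define P where "P v = sample_weight (pert h \<delta> v) s m" for v
  define U where "U = sample_weight (pert h 0 (\<lambda>_. True)) s m"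
  define f where "f v D = measure (A s D) (near_set k h v)" for v D
  have h: "1 \<le> h" "2 * h \<le> k" and \<delta>: "0 \<le> \<delta>" "\<delta> \<le> 1/2" and T: "0 \<le> T"
    using k \<alpha> unfolding h_def \<delta>_def T_def by auto
  have near: "3/4 \<le> (\<Sum>D\<in>datasets k s m. P v D * f v D)" for v
    using sum_measure_near_set_ge[OF A(1) h, of \<delta> s \<alpha> v] \<delta> \<alpha> L unfolding P_def f_def \<delta>_def by simp
  have change: "(\<Sum>D\<in>datasets k s m. P v D * f v D) \<le> (1 + (exp \<epsilon> - 1) * T) ^ s * (\<Sum>D\<in>datasets k s m. U D * f v D)"
    for v
    unfolding P_def U_def f_def pert_zero_indep[of h "\<lambda>_. True" v]
    by (rule private_change_of_measure[OF A less_imp_le[OF \<epsilon>(1)] near_set_sets[OF h(2)]])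
       (use k \<delta> l1_dist_pert_uniform_user_le[OF h \<delta>] in \<open>auto simp: pert_nonneg sum_pert[OF h] T_def\<close>)
  have packing: "(\<Sum>v\<in>cube h. \<Sum>D\<in>datasets k s m. U D * f v D) \<le> Bnd"
    unfolding U_def f_def Bnd_def
    by (rule sum_cube_measure_near_set_le[OF A(1) h(2)])
       (simp_all add: sample_weight_nonneg pert_nonneg sum_sample_weight_pert[OF h])
  have "3/4 * 2 ^ h = (\<Sum>v\<in>cube h. 3/4 :: real)"
    by (simp add: card_cube)
  also have "\<dots> \<le> (\<Sum>v\<in>cube h. (1 + (exp \<epsilon> - 1) * T) ^ s * (\<Sum>D\<in>datasets k s m. U D * f v D))"
    using near change by (intro sum_mono) (meson order_trans)
  also have "\<dots> = (1 + (exp \<epsilon> - 1) * T) ^ s * (\<Sum>v\<in>cube h. \<Sum>D\<in>datasets k s m. U D * f v D)"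
    by (simp add: sum_distrib_left)
  also have "\<dots> \<le> exp (2 * \<epsilon> * T * s) * Bnd"
    using dp_factor_power_le_exp[OF \<epsilon> T] packing
    by (intro mult_mono) (auto simp: U_def f_def intro!: sum_nonneg mult_nonneg_nonneg sample_weight_nonneg pert_nonneg)
  finally have "real h / 10 \<le> 2 * \<epsilon> * T * s"
    using h unfolding Bnd_def by (intro packing_bound_arith) auto
  then show ?thesis
    unfolding T_def \<delta>_def h_def by (simp add: algebra_simps)
qed

lemma ennreal_le_opt_user_complexity:
  assumes "\<And>A s. valid_alg k m A \<Longrightarrow> diff_private k m \<epsilon> \<delta> A \<Longrightarrow>
      (SUP p\<in>dists k. loss k A s m p) \<le> ennreal \<alpha> \<Longrightarrow> B \<le> real s"
  shows "ennreal B \<le> ennreal_of_enat (opt_user_complexity k m \<alpha> \<epsilon> \<delta>)"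
proof -
  have "enat (nat \<lceil>B\<rceil>) \<le> opt_user_complexity k m \<alpha> \<epsilon> \<delta>"
    unfolding opt_user_complexity_def user_complexity_def
    using assms by (intro INF_greatest Inf_greatest) (force simp: nat_le_iff ceiling_le_iff)
  then have "ennreal_of_enat (enat (nat \<lceil>B\<rceil>)) \<le> ennreal_of_enat (opt_user_complexity k m \<alpha> \<epsilon> \<delta>)"
    by (rule ennreal_of_enat_le_iff[THEN iffD2])
  moreover have "ennreal B \<le> ennreal_of_enat (enat (nat \<lceil>B\<rceil>))"
    by (simp add: ennreal_of_nat_eq_real_of_nat ennreal_leI) linarith
  ultimately show ?thesis
    by (rule order_trans[rotated])
qed

lemma combine_user_lower_bounds:
  fixes k h m s \<alpha> \<epsilon> :: real
  assumes h: "0 \<le> h" "k \<le> 3 * h" and m: "0 < m" and \<alpha>: "0 < \<alpha>" and \<epsilon>: "0 < \<epsilon>"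
    and samples: "h / (1920 * \<alpha>\<^sup>2) < s * m" and privacy: "h \<le> 2560 * sqrt m * \<alpha> * \<epsilon> * s"
  shows "1/15360 * (k / (m * \<alpha>\<^sup>2) + k / (sqrt m * \<alpha> * \<epsilon>)) \<le> s"
proof -
  have "0 \<le> h / (1920 * \<alpha>\<^sup>2)"
    using h(1) by simp
  then have "0 < s"
    using samples m by (smt (verit) zero_less_mult_iff)
  have "k / (m * \<alpha>\<^sup>2) \<le> 5760 * s"
    using samples h m \<alpha> by (simp add: field_simps)
  moreover have "k / (sqrt m * \<alpha> * \<epsilon>) \<le> 7680 * s"
    using privacy h m \<alpha> \<epsilon> by (simp add: field_simps)
  ultimately have "1/15360 * (k / (m * \<alpha>\<^sup>2) + k / (sqrt m * \<alpha> * \<epsilon>)) \<le> 1/15360 * (5760 * s + 7680 * s)"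
    by (intro mult_left_mono add_mono) auto
  also have "\<dots> \<le> s"
    using \<open>0 < s\<close> by (simp add: field_simps)
  finally show ?thesis .
qed

theorem theorem3:
  shows "\<exists>C>0. \<exists>\<alpha>\<^sub>0>0. \<forall>(k::nat) (m::nat) (\<alpha>::real) (\<epsilon>::real).
    2 \<le> k \<longrightarrow> 1 \<le> m \<longrightarrow> 0 < \<alpha> \<longrightarrow> \<alpha> \<le> \<alpha>\<^sub>0 \<longrightarrow> 0 < \<epsilon> \<longrightarrow> \<epsilon> \<le> 1 \<longrightarrow>
    ennreal (C * (real k / (real m * \<alpha>\<^sup>2) + real k / (sqrt (real m) * \<alpha> * \<epsilon>)))
      \<le> ennreal_of_enat (opt_user_complexity k m \<alpha> \<epsilon> 0)"
proof (rule exI[of _ "1/15360"], intro conjI exI[of _ "1/128"] allI impI)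
  fix k m :: nat and \<alpha> \<epsilon> :: real
  assume k: "2 \<le> k" and m: "1 \<le> m" and \<alpha>: "0 < \<alpha>" "\<alpha> \<le> 1/128" and \<epsilon>: "0 < \<epsilon>" "\<epsilon> \<le> 1"
  show "ennreal (1/15360 * (real k / (real m * \<alpha>\<^sup>2) + real k / (sqrt (real m) * \<alpha> * \<epsilon>)))
      \<le> ennreal_of_enat (opt_user_complexity k m \<alpha> \<epsilon> 0)"
  proof (rule ennreal_le_opt_user_complexity)
    fix A s
    assume A: "valid_alg k m A" "diff_private k m \<epsilon> 0 A" and L: "(SUP p\<in>dists k. loss k A s m p) \<le> ennreal \<alpha>"
    have "k \<le> 3 * (k div 2)"
      using k by presburger
    then have "real k \<le> 3 * real (k div 2)"
      by (metis of_nat_le_iff of_nat_mult of_nat_numeral)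
    then show "1/15360 * (real k / (real m * \<alpha>\<^sup>2) + real k / (sqrt (real m) * \<alpha> * \<epsilon>)) \<le> real s"
      using users_samples_lower_bound[OF k A(1) \<alpha>(1) _ L] users_privacy_lower_bound[OF k A \<alpha> \<epsilon> L] m \<alpha> \<epsilon>
      by (intro combine_user_lower_bounds) auto
  qed
qed auto

end
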